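(* Let $\alpha,\beta,\theta>0$, set $\gamma=\theta$, and let $X$ be the birth and death process on $\mathbb{Z}$ with birth rates $\alpha+i^-\theta$ and death rates $\beta+i^+\theta$, started at $X(0)=x\in\mathbb{Z}$. Then $$\lim_{t\to\infty}s(t)=\frac{\alpha+\beta}{2\theta}+\frac{(\alpha-\beta)^2}{\theta^2}+\frac{\lim_{t\to\infty}m_+(t)+\lim_{t\to\infty}m_-(t)}{2},$$ and consequently $$\lim_{t\to\infty}s(t)\ \ge\ \Big(\frac{\alpha-\beta}{\theta}\Big)^2+\frac{\max\{\alpha,\beta\}}{\theta}.$$
   Context: $s(t)=\mathbb{E}[(X(t))^2]$, $m_+(t)=\mathbb{E}(X^+(t))$, $m_-(t)=\mathbb{E}(X^-(t))$, with $a^+=\max\{a,0\}$, $a^-=\max\{0,-a\}$; all these limits exist. *)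

theory Defs
  imports "HOL-Analysis.Analysis"
begin

definition pos_part :: "int \<Rightarrow> int" where "pos_part a = max a 0"
definition neg_part :: "int \<Rightarrow> int" where "neg_part a = max 0 (- a)"

text \<open>Birth rate (i to i+1) and death rate (i to i-1) at state i, with gamma = theta.\<close>
definition birth_rate :: "real \<Rightarrow> real \<Rightarrow> int \<Rightarrow> real" where
  "birth_rate \<alpha> \<theta> i = \<alpha> + real_of_int (neg_part i) * \<theta>"
definition death_rate :: "real \<Rightarrow> real \<Rightarrow> int \<Rightarrow> real" where
  "death_rate \<beta> \<theta> i = \<beta> + real_of_int (pos_part i) * \<theta>"

text \<open>p t y = P(X(t) = y): the law of the birth-death process started at x,
  characterised as a probability-distribution-valued solution of the Kolmogorov
  forward equations with initial condition delta_x.\<close>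
definition bd_law :: "real \<Rightarrow> real \<Rightarrow> real \<Rightarrow> int \<Rightarrow> (real \<Rightarrow> int \<Rightarrow> real) \<Rightarrow> bool" where
  "bd_law \<alpha> \<beta> \<theta> x p \<longleftrightarrow>
     (\<forall>y. p 0 y = (if y = x then 1 else 0)) \<and>
     (\<forall>t\<ge>0. \<forall>y. p t y \<ge> 0) \<and>
     (\<forall>t\<ge>0. ((\<lambda>y. p t y) has_sum 1) UNIV) \<and>
     (\<forall>y. continuous_on {0..} (\<lambda>t. p t y)) \<and>
     (\<forall>t>0. \<forall>y. ((\<lambda>s. p s y) has_real_derivative
         (birth_rate \<alpha> \<theta> (y - 1) * p t (y - 1) + death_rate \<beta> \<theta> (y + 1) * p t (y + 1)
          - (birth_rate \<alpha> \<theta> y + death_rate \<beta> \<theta> y) * p t y)) (at t))"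

definition second_moment :: "(real \<Rightarrow> int \<Rightarrow> real) \<Rightarrow> real \<Rightarrow> real" where
  "second_moment p t = (\<Sum>\<^sub>\<infinity>y. real_of_int y ^ 2 * p t y)"
definition mean_pos :: "(real \<Rightarrow> int \<Rightarrow> real) \<Rightarrow> real \<Rightarrow> real" where
  "mean_pos p t = (\<Sum>\<^sub>\<infinity>y. real_of_int (pos_part y) * p t y)"
definition mean_neg :: "(real \<Rightarrow> int \<Rightarrow> real) \<Rightarrow> real \<Rightarrow> real" where
  "mean_neg p t = (\<Sum>\<^sub>\<infinity>y. real_of_int (neg_part y) * p t y)"

end

theory Submission
  imports Defs "HOL-Real_Asymp.Real_Asymp"
begin

(*
  Write m(t) = E X(t), s(t) = E X(t)^2 and a(t) = E |X(t)|. Since the rates satisfy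
  b(y) - d(y) = alpha - beta - theta y and b(y) + d(y) = alpha + beta + theta |y|, the forward
  equations give the closed linear system
    m' = alpha - beta - theta m,      s' = alpha + beta + theta a + 2 (alpha - beta) m - 2 theta s,
  while m_+ = (a + m) / 2 and m_- = (a - m) / 2. So m tends to (alpha - beta) / theta, and once a(t)
  converges, s converges to the stated value; the lower bound is |lim m| <= lim a.

  The convergence of a(t) is the heart of the matter. With the tail function G(t, y) = P(X(t) >= y)
  one has a(t) = sum_{y >= 1} G(t, y) + sum_{y <= 0} (1 - G(t, y)), and for fixed h the difference
  H(t, y) = G(t + h, y) - G(t, y) solves a discrete parabolic equation whose coefficients satisfy
  b(y) - b(y - 1) + d(y - 1) - d(y) = -theta. Hence sum_y |H(t, y)| decays like exp (-theta t)
  (an L1 contraction), so a(t) is Cauchy at infinity. Exchanging derivatives with the infinite sums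
  is justified by an exponential bound on the fourth moment, obtained from truncated moments.
*)

lemma summable_on_diff_real:
  fixes f g :: "'a \<Rightarrow> real"
  assumes "f summable_on A" "g summable_on A"
  shows "(\<lambda>x. f x - g x) summable_on A"
  using summable_on_add[OF assms(1) summable_on_uminus[THEN iffD2, OF assms(2)]] by simp

lemma infsum_diff_real:
  fixes f g :: "'a \<Rightarrow> real"
  assumes "f summable_on A" "g summable_on A"
  shows "(\<Sum>\<^sub>\<infinity>x\<in>A. f x - g x) = infsum f A - infsum g A"
  using infsum_add[OF assms(1) summable_on_uminus[THEN iffD2, OF assms(2)]] infsum_uminus[of g A]
  by simp

lemma summable_on_sum_real:
  fixes f :: "'i \<Rightarrow> 'a \<Rightarrow> real"
  assumes "finite I" "\<And>i. i \<in> I \<Longrightarrow> f i summable_on A"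
  shows "(\<lambda>x. \<Sum>i\<in>I. f i x) summable_on A"
  using assms by (induction I rule: finite_induct) (auto intro: summable_on_add)

lemma infsum_sum_real:
  fixes f :: "'i \<Rightarrow> 'a \<Rightarrow> real"
  assumes "finite I" "\<And>i. i \<in> I \<Longrightarrow> f i summable_on A"
  shows "(\<Sum>\<^sub>\<infinity>x\<in>A. \<Sum>i\<in>I. f i x) = (\<Sum>i\<in>I. infsum (f i) A)"
  using assms
  by (induction I rule: finite_induct) (simp_all add: infsum_add summable_on_sum_real)

lemma summable_on_abs_le:
  fixes f g :: "'a \<Rightarrow> real"
  assumes "g summable_on A" "\<And>x. x \<in> A \<Longrightarrow> \<bar>f x\<bar> \<le> g x"
  shows "f summable_on A"
proof -
  have "(\<lambda>x. norm (g x)) summable_on A"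
    using assms(1) summable_on_iff_abs_summable_on_real by blast
  then have "(\<lambda>x. norm (f x)) summable_on A"
    by (rule Infinite_Sum.abs_summable_on_comparison_test) (use assms(2) in force)
  then show ?thesis
    using summable_on_iff_abs_summable_on_real by blast
qed

lemma abs_infsum_le:
  fixes f g :: "'a \<Rightarrow> real"
  assumes "g summable_on A" "\<And>x. x \<in> A \<Longrightarrow> \<bar>f x\<bar> \<le> g x"
  shows "\<bar>infsum f A\<bar> \<le> infsum g A"
proof -
  have f: "f summable_on A"
    using summable_on_abs_le assms by blast
  have "infsum f A \<le> infsum g A"
    using assms(2) by (intro infsum_mono[OF f assms(1)]) force
  moreover have "- infsum f A \<le> infsum g A"
    using assms(2) infsum_mono[OF summable_on_uminus[THEN iffD2, OF f] assms(1)]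
    by (simp add: infsum_uminus abs_le_iff)
  ultimately show ?thesis
    by linarith
qed

lemma summable_on_int_finite_support:
  fixes f :: "int \<Rightarrow> real"
  assumes "\<And>y. \<bar>y\<bar> > int n \<Longrightarrow> f y = 0"
  shows "f summable_on UNIV"
  using assms by (subst summable_on_cong_neutral[of UNIV "{-int n..int n}" f f, symmetric]) auto

lemma infsum_int_finite_support:
  fixes f :: "int \<Rightarrow> real"
  assumes "\<And>y. \<bar>y\<bar> > int n \<Longrightarrow> f y = 0"
  shows "(\<Sum>\<^sub>\<infinity>y. f y) = (\<Sum>y\<in>{-int n..int n}. f y)"
proof -
  have "infsum f UNIV = infsum f {-int n..int n}"
    using assms by (intro infsum_cong_neutral) auto
  then show ?thesis
    by simp
qed

section \<open>Linear differential inequalities\<close>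

lemma linear_ode_upper_bound:
  fixes \<phi> \<phi>' :: "real \<Rightarrow> real"
  assumes "a \<le> t" "lam \<noteq> 0" "continuous_on {a..t} \<phi>"
    and "\<And>u. a < u \<Longrightarrow> u < t \<Longrightarrow> (\<phi> has_real_derivative \<phi>' u) (at u)"
    and "\<And>u. a < u \<Longrightarrow> u < t \<Longrightarrow> \<phi>' u \<le> c - lam * \<phi> u"
  shows "\<phi> t \<le> c / lam + (\<phi> a - c / lam) * exp (- lam * (t - a))"
proof -
  define \<psi> where "\<psi> u = (\<phi> u - c / lam) * exp (lam * (u - a))" for u
  have "\<psi> t \<le> \<psi> a"
  proof (rule DERIV_nonpos_imp_decreasing_open[OF assms(1)])
    fix u assume u: "a < u" "u < t"
    have "(\<psi> has_real_derivative
            \<phi>' u * exp (lam * (u - a)) + (\<phi> u - c / lam) * (exp (lam * (u - a)) * lam)) (at u)"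
      unfolding \<psi>_def by (auto intro!: derivative_eq_intros assms(4)[OF u])
    moreover have "\<phi>' u * exp (lam * (u - a)) + (\<phi> u - c / lam) * (exp (lam * (u - a)) * lam)
        = (\<phi>' u - (c - lam * \<phi> u)) * exp (lam * (u - a))"
      using assms(2) by (simp add: field_simps)
    moreover have "(\<phi>' u - (c - lam * \<phi> u)) * exp (lam * (u - a)) \<le> 0"
      using assms(5)[OF u] by (simp add: mult_nonpos_nonneg)
    ultimately show "\<exists>y. (\<psi> has_real_derivative y) (at u) \<and> y \<le> 0"
      by metis
  next
    show "continuous_on {a..t} \<psi>"
      unfolding \<psi>_def by (intro continuous_intros assms(3))
  qed
  then have "(\<phi> t - c / lam) * exp (lam * (t - a)) * exp (- lam * (t - a))
      \<le> (\<phi> a - c / lam) * exp (- lam * (t - a))"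
    unfolding \<psi>_def by (simp add: mult_right_mono)
  then show ?thesis
    by (simp add: mult.assoc flip: exp_add)
qed

lemma linear_ode_lower_bound:
  fixes \<phi> \<phi>' :: "real \<Rightarrow> real"
  assumes "a \<le> t" "lam \<noteq> 0" "continuous_on {a..t} \<phi>"
    and "\<And>u. a < u \<Longrightarrow> u < t \<Longrightarrow> (\<phi> has_real_derivative \<phi>' u) (at u)"
    and "\<And>u. a < u \<Longrightarrow> u < t \<Longrightarrow> \<phi>' u \<ge> c - lam * \<phi> u"
  shows "\<phi> t \<ge> c / lam + (\<phi> a - c / lam) * exp (- lam * (t - a))"
proof -
  have "(- \<phi>) t \<le> (- c) / lam + ((- \<phi>) a - (- c) / lam) * exp (- lam * (t - a))"
  proof (rule linear_ode_upper_bound[OF assms(1,2), where \<phi>' = "\<lambda>u. - \<phi>' u"])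
    show "continuous_on {a..t} (- \<phi>)"
      using assms(3) by (simp add: fun_Compl_def continuous_on_minus)
    fix u assume u: "a < u" "u < t"
    show "((- \<phi>) has_real_derivative - \<phi>' u) (at u)"
      using DERIV_minus[OF assms(4)[OF u]] by (simp add: fun_Compl_def)
    show "- \<phi>' u \<le> - c - lam * (- \<phi>) u"
      using assms(5)[OF u] by simp
  qed
  then show ?thesis
    by (simp add: algebra_simps)
qed

lemma continuous_on_if_derivative_pos:
  assumes "\<And>u. u > 0 \<Longrightarrow> (\<phi> has_real_derivative \<phi>' u) (at u)" "a > 0"
  shows "continuous_on {a..b} \<phi>"
proof (rule continuous_at_imp_continuous_on, rule ballI)
  fix x assume "x \<in> {a..b}"
  then have "x > 0"
    using assms(2) by simp
  then show "isCont \<phi> x"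
    using assms(1) DERIV_isCont by blast
qed

lemma linear_ode_bounded:
  fixes \<phi> \<phi>' :: "real \<Rightarrow> real"
  assumes lam: "lam > 0"
    and der: "\<And>u. u > 0 \<Longrightarrow> (\<phi> has_real_derivative \<phi>' u) (at u)"
    and le: "\<And>u. u > 0 \<Longrightarrow> \<phi>' u \<le> C - lam * \<phi> u"
    and t: "t \<ge> 1"
  shows "\<phi> t \<le> max (\<phi> 1) (C / lam)"
proof -
  have ub: "\<phi> t \<le> C / lam + (\<phi> 1 - C / lam) * exp (- lam * (t - 1))"
    using lam t der le
    by (intro linear_ode_upper_bound[where \<phi>' = \<phi>'] continuous_on_if_derivative_pos[OF der]) auto
  have "exp (- lam * (t - 1)) \<le> 1"
    using lam t by simp
  then have "(\<phi> 1 - C / lam) * exp (- lam * (t - 1)) \<le> max 0 (\<phi> 1 - C / lam)"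
    by (cases "\<phi> 1 - C / lam \<ge> 0") (auto intro: mult_left_le mult_nonpos_nonneg)
  then show ?thesis
    using ub by linarith
qed

lemma linear_ode_near_limit:
  fixes \<phi> c :: "real \<Rightarrow> real"
  assumes lam: "lam > 0" and "T \<le> t" and "\<epsilon> \<ge> 0" and cont: "continuous_on {T..t} \<phi>"
    and der: "\<And>u. T < u \<Longrightarrow> u < t \<Longrightarrow> (\<phi> has_real_derivative (c u - lam * \<phi> u)) (at u)"
    and near: "\<And>u. T < u \<Longrightarrow> u < t \<Longrightarrow> \<bar>c u - L\<bar> \<le> lam * \<epsilon>"
  shows "\<bar>\<phi> t - L / lam\<bar> \<le> \<epsilon> + (\<bar>\<phi> T - L / lam\<bar> + \<epsilon>) * exp (- lam * (t - T))"
proof -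
  define ex where "ex = exp (- lam * (t - T))"
  define B where "B = \<bar>\<phi> T - L / lam\<bar> + \<epsilon>"
  have near': "c u - lam * \<phi> u \<le> L + lam * \<epsilon> - lam * \<phi> u" "c u - lam * \<phi> u \<ge> L - lam * \<epsilon> - lam * \<phi> u"
    if "T < u" "u < t" for u
    using near[OF that] by (simp_all add: abs_le_iff)
  have up: "\<phi> t \<le> (L + lam * \<epsilon>) / lam + (\<phi> T - (L + lam * \<epsilon>) / lam) * ex"
    unfolding ex_def using assms near' by (intro linear_ode_upper_bound[OF _ _ cont der]) auto
  have lo: "\<phi> t \<ge> (L - lam * \<epsilon>) / lam + (\<phi> T - (L - lam * \<epsilon>) / lam) * ex"
    unfolding ex_def using assms near' by (intro linear_ode_lower_bound[OF _ _ cont der]) auto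
  have shift: "(L + lam * \<epsilon>) / lam = L / lam + \<epsilon>" "(L - lam * \<epsilon>) / lam = L / lam - \<epsilon>"
    using lam by (simp_all add: field_simps)
  have "\<phi> T - (L / lam + \<epsilon>) \<le> B" "- (\<phi> T - (L / lam - \<epsilon>)) \<le> B"
    unfolding B_def using \<open>\<epsilon> \<ge> 0\<close> abs_ge_self[of "\<phi> T - L / lam"] abs_ge_minus_self[of "\<phi> T - L / lam"]
    by linarith+
  then have "(\<phi> T - (L / lam + \<epsilon>)) * ex \<le> B * ex" "- (\<phi> T - (L / lam - \<epsilon>)) * ex \<le> B * ex"
    unfolding ex_def by (simp_all add: mult_right_mono del: mult_minus_left)
  then show ?thesis
    using up lo unfolding shift abs_le_iff B_def[symmetric] ex_def[symmetric] by linarith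
qed

lemma linear_ode_tendsto:
  fixes \<phi> c :: "real \<Rightarrow> real"
  assumes lam: "lam > 0"
    and der: "\<And>u. u > 0 \<Longrightarrow> (\<phi> has_real_derivative (c u - lam * \<phi> u)) (at u)"
    and lim: "(c \<longlongrightarrow> L) at_top"
  shows "(\<phi> \<longlongrightarrow> L / lam) at_top"
  unfolding tendsto_iff dist_real_def
proof (intro allI impI)
  fix e :: real assume e: "e > 0"
  obtain T0 where T0: "\<And>u. u \<ge> T0 \<Longrightarrow> \<bar>c u - L\<bar> < lam * (e / 4)"
    using lim lam e unfolding tendsto_iff dist_real_def eventually_at_top_linorder
    by (metis divide_pos_pos mult_pos_pos zero_less_numeral)
  define T where "T = max T0 1"
  have "((\<lambda>t. (\<bar>\<phi> T - L / lam\<bar> + e / 4) * exp (- lam * (t - T))) \<longlongrightarrow> 0) at_top"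
    using lam by real_asymp
  then have "eventually (\<lambda>t. (\<bar>\<phi> T - L / lam\<bar> + e / 4) * exp (- lam * (t - T)) < e / 2) at_top"
    using e by (intro order_tendstoD(2)) auto
  moreover have "eventually (\<lambda>t. t \<ge> T) at_top"
    by simp
  ultimately show "eventually (\<lambda>t. \<bar>\<phi> t - L / lam\<bar> < e) at_top"
  proof eventually_elim
    case (elim t)
    have "\<bar>\<phi> t - L / lam\<bar> \<le> e / 4 + (\<bar>\<phi> T - L / lam\<bar> + e / 4) * exp (- lam * (t - T))"
    proof (rule linear_ode_near_limit[OF lam elim(2)])
      show "e / 4 \<ge> 0"
        using e by simp
      show "continuous_on {T..t} \<phi>"
        unfolding T_def by (rule continuous_on_if_derivative_pos[OF der]) auto
      show "(\<phi> has_real_derivative (c u - lam * \<phi> u)) (at u)" if "T < u" for u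
        using that der unfolding T_def by simp
      show "\<bar>c u - L\<bar> \<le> lam * (e / 4)" if "T < u" for u
        using that T0[of u] unfolding T_def by simp
    qed
    then show ?case
      using elim(1) e by linarith
  qed
qed

lemma tendsto_of_increment_bound:
  fixes f g :: "real \<Rightarrow> real"
  assumes g: "(g \<longlongrightarrow> 0) at_top"
    and incr: "\<And>t h. t \<ge> T0 \<Longrightarrow> h \<ge> 0 \<Longrightarrow> \<bar>f (t + h) - f t\<bar> \<le> g t"
  shows "\<exists>L. (f \<longlongrightarrow> L) at_top"
proof -
  have "cauchy_filter (filtermap f at_top)"
    unfolding cauchy_filter_metric_filtermap
  proof (intro allI impI)
    fix e :: real assume "e > 0"
    then have "eventually (\<lambda>t. g t < e / 2) at_top"
      using g by (intro order_tendstoD(2)) auto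
    then obtain T where T: "\<And>t. t \<ge> T \<Longrightarrow> g t < e / 2"
      unfolding eventually_at_top_linorder by blast
    define T' where "T' = max T T0"
    have close: "\<bar>f t - f T'\<bar> < e / 2" if "t \<ge> T'" for t
    proof -
      have "\<bar>f (T' + (t - T')) - f T'\<bar> \<le> g T'"
        using that by (intro incr) (auto simp: T'_def)
      then show ?thesis
        using T[of T'] by (simp add: T'_def)
    qed
    have "dist (f s) (f t) < e" if "s \<ge> T'" "t \<ge> T'" for s t
    proof (rule dist_triangle_half_l)
      show "dist (f s) (f T') < e / 2" "dist (f t) (f T') < e / 2"
        using close that by (simp_all add: dist_real_def)
    qed
    then show "\<exists>P. eventually P at_top \<and> (\<forall>s t. P s \<and> P t \<longrightarrow> dist (f s) (f t) < e)"
      using eventually_ge_at_top[of T'] by blast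
  qed
  then have "\<exists>L. filtermap f at_top \<le> nhds L"
    by (intro cauchy_filter_complete_converges[OF _ complete_UNIV]) (simp_all add: filtermap_bot_iff)
  then show ?thesis
    unfolding filterlim_def .
qed

lemma has_real_derivative_uniform_limit:
  fixes F F' :: "nat \<Rightarrow> real \<Rightarrow> real" and G G' :: "real \<Rightarrow> real"
  assumes S: "convex S" "open S" "x0 \<in> S"
    and der: "\<And>n x. x \<in> S \<Longrightarrow> (F n has_real_derivative F' n x) (at x)"
    and unif: "\<And>e. e > 0 \<Longrightarrow> \<exists>N. \<forall>n\<ge>N. \<forall>x\<in>S. \<bar>F' n x - G' x\<bar> \<le> e"
    and lim: "\<And>x. x \<in> S \<Longrightarrow> (\<lambda>n. F n x) \<longlonglongrightarrow> G x"
  shows "(G has_real_derivative G' x0) (at x0)"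
proof -
  have derF: "\<And>n x. x \<in> S \<Longrightarrow> (F n has_derivative (*) (F' n x)) (at x within S)"
    using der has_field_derivative_def has_field_derivative_at_within by blast
  have unif': "\<forall>\<^sub>F n in sequentially. \<forall>x\<in>S. \<forall>h. norm ((*) (F' n x) h - (*) (G' x) h) \<le> e * norm h"
    if e: "e > 0" for e
  proof -
    obtain N where N: "\<forall>n\<ge>N. \<forall>x\<in>S. \<bar>F' n x - G' x\<bar> \<le> e"
      using unif[OF e] by blast
    show ?thesis
      unfolding eventually_sequentially
    proof (intro exI allI impI ballI)
      fix n x h assume "N \<le> n" "x \<in> S"
      then have "\<bar>F' n x - G' x\<bar> * \<bar>h\<bar> \<le> e * \<bar>h\<bar>"
        using N by (intro mult_right_mono) auto
      then show "norm ((*) (F' n x) h - (*) (G' x) h) \<le> e * norm h"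
        by (simp add: left_diff_distrib[symmetric] abs_mult)
    qed
  qed
  obtain g where g: "\<forall>x\<in>S. (\<lambda>n. F n x) \<longlonglongrightarrow> g x \<and> (g has_derivative (*) (G' x)) (at x within S)"
    using has_derivative_sequence[OF S(1) derF unif' S(3) lim[OF S(3)]] by blast
  have gG: "g x = G x" if "x \<in> S" for x
    using g that lim[OF that] LIMSEQ_unique by blast
  have "(g has_real_derivative G' x0) (at x0)"
    using g S(2,3) at_within_open[OF S(3,2)] has_field_derivative_def by fastforce
  then show ?thesis
    by (rule has_field_derivative_transform_within_open[OF _ S(2,3)]) (use gG in auto)
qed

lemma power_le_one_plus_power:
  fixes u :: real
  assumes "0 \<le> u" "k \<le> m"
  shows "u ^ k \<le> 1 + u ^ m"
proof (cases "u \<le> 1")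
  case True
  then have "u ^ k \<le> 1"
    using assms by (simp add: power_le_one)
  then show ?thesis
    using assms by (smt (verit) zero_le_power)
next
  case False
  then have "u ^ k \<le> u ^ m"
    using assms by (intro power_increasing) auto
  then show ?thesis
    by simp
qed

lemma abs_fourth_power_increment:
  fixes Y :: real
  shows "\<bar>(Y + 1) ^ 4 - Y ^ 4\<bar> \<le> 15 * (1 + \<bar>Y\<bar> ^ 3)"
proof -
  define u where "u = \<bar>Y\<bar>"
  have u: "u \<ge> 0" "u \<le> 1 + u ^ 3" "u ^ 2 \<le> 1 + u ^ 3"
    unfolding u_def using power_le_one_plus_power[of "\<bar>Y\<bar>" 1 3] power_le_one_plus_power[of "\<bar>Y\<bar>" 2 3]
    by auto
  have "(Y + 1) ^ 4 - Y ^ 4 = 4 * Y ^ 3 + 6 * Y ^ 2 + 4 * Y + 1"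
    by algebra
  also have "\<bar>\<dots>\<bar> \<le> \<bar>4 * Y ^ 3\<bar> + 6 * Y ^ 2 + \<bar>4 * Y\<bar> + 1"
    by (smt (verit) zero_le_power2)
  also have "\<dots> = 4 * u ^ 3 + 6 * u ^ 2 + 4 * u + 1"
    unfolding u_def by (simp add: abs_mult power_abs)
  also have "\<dots> \<le> 15 * (1 + u ^ 3)"
    using u by simp
  finally show ?thesis
    unfolding u_def .
qed

lemma abs_fourth_power_decrement:
  fixes Y :: real
  shows "\<bar>(Y - 1) ^ 4 - Y ^ 4\<bar> \<le> 15 * (1 + \<bar>Y\<bar> ^ 3)"
proof -
  have "(Y - 1) ^ 4 - Y ^ 4 = (- Y + 1) ^ 4 - (- Y) ^ 4"
    by algebra
  then show ?thesis
    using abs_fourth_power_increment[of "- Y"] by simp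
qed

lemma cubic_majorants:
  fixes u :: real
  assumes "u \<ge> 0"
  shows "(1 + (u + 1) ^ 2) * (1 + u) \<le> 10 * (1 + u ^ 3)"
    and "2 * ((1 + u ^ 2) * (1 + u)) \<le> 10 * (1 + u ^ 3)"
proof -
  have u: "u \<le> 1 + u ^ 3" "u ^ 2 \<le> 1 + u ^ 3" "0 \<le> u ^ 3" "10 * (1 + u ^ 3) = 10 + 10 * u ^ 3"
    using assms power_le_one_plus_power[OF assms, of 1 3] power_le_one_plus_power[OF assms, of 2 3]
    by auto
  have "(1 + (u + 1) ^ 2) * (1 + u) = 2 + 4 * u + 3 * u ^ 2 + u ^ 3"
    by algebra
  then show "(1 + (u + 1) ^ 2) * (1 + u) \<le> 10 * (1 + u ^ 3)"
    using u by linarith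
  have "2 * ((1 + u ^ 2) * (1 + u)) = 2 + 2 * u + 2 * u ^ 2 + 2 * u ^ 3"
    by algebra
  then show "2 * ((1 + u ^ 2) * (1 + u)) \<le> 10 * (1 + u ^ 3)"
    using u by linarith
qed

lemma sq_shift_le:
  fixes Y :: real
  shows "(Y + 1)\<^sup>2 \<le> (\<bar>Y\<bar> + 1)\<^sup>2" and "(Y - 1)\<^sup>2 \<le> (\<bar>Y\<bar> + 1)\<^sup>2"
  using power_mono[of "\<bar>Y + 1\<bar>" "\<bar>Y\<bar> + 1" 2] power_mono[of "\<bar>Y - 1\<bar>" "\<bar>Y\<bar> + 1" 2] by auto

lemma abs_diff_le_add:
  fixes a c :: real
  shows "0 \<le> a \<Longrightarrow> 0 \<le> c \<Longrightarrow> \<bar>a - c\<bar> \<le> a + c"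
  by simp

lemma abs_le_sqrt_sq_add:
  fixes H \<delta> :: real
  shows "\<bar>H\<bar> \<le> sqrt (H\<^sup>2 + \<delta>\<^sup>2)"
  by (rule real_le_rsqrt) simp

lemma sqrt_sq_add_le:
  fixes H \<delta> :: real
  assumes "\<delta> \<ge> 0"
  shows "sqrt (H\<^sup>2 + \<delta>\<^sup>2) \<le> \<bar>H\<bar> + \<delta>"
proof (rule real_le_lsqrt)
  show "0 \<le> \<bar>H\<bar> + \<delta>"
    using assms by simp
  have "(\<bar>H\<bar> + \<delta>)\<^sup>2 = H\<^sup>2 + \<delta>\<^sup>2 + 2 * \<bar>H\<bar> * \<delta>"
    by (simp add: power2_eq_square algebra_simps)
  then show "H\<^sup>2 + \<delta>\<^sup>2 \<le> (\<bar>H\<bar> + \<delta>)\<^sup>2"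
    using assms by simp
qed

text \<open>The smooth function \<open>sqrt (H\<^sup>2 + \<delta>\<^sup>2) - \<delta>\<close> approximates \<open>\<bar>H\<bar>\<close>; its derivative is
  \<open>H'\<close> times the smoothed sign \<open>H / sqrt (H\<^sup>2 + \<delta>\<^sup>2)\<close>, and the next inequality is a discrete
  Kato inequality for that smoothed sign.\<close>

lemma smoothed_sign_bound:
  fixes H Hm Hp B D \<delta> :: real
  assumes \<delta>: "\<delta> > 0" and B: "B \<ge> 0" and D: "D \<ge> 0"
  shows "(H / sqrt (H\<^sup>2 + \<delta>\<^sup>2)) * (B * (Hm - H) - D * (H - Hp))
         \<le> B * \<bar>Hm\<bar> + D * \<bar>Hp\<bar> - (B + D) * (\<bar>H\<bar> - \<delta>)"
proof -
  define r where "r = sqrt (H\<^sup>2 + \<delta>\<^sup>2)"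
  define \<sigma> where "\<sigma> = H / r"
  have r: "r > 0" "\<bar>H\<bar> \<le> r" "r \<le> \<bar>H\<bar> + \<delta>"
    unfolding r_def using \<delta> abs_le_sqrt_sq_add sqrt_sq_add_le[of \<delta> H]
    by (auto simp: add_nonneg_pos)
  have \<sigma>: "\<bar>\<sigma>\<bar> \<le> 1"
    unfolding \<sigma>_def using r by (simp add: abs_div)
  have "(\<bar>H\<bar> - \<delta>) * r \<le> H\<^sup>2"
  proof (cases "\<bar>H\<bar> - \<delta> \<ge> 0")
    case True
    then have "(\<bar>H\<bar> - \<delta>) * r \<le> (\<bar>H\<bar> - \<delta>) * (\<bar>H\<bar> + \<delta>)"
      using r by (intro mult_left_mono) auto
    also have "\<dots> \<le> H\<^sup>2"
      by (simp add: algebra_simps power2_eq_square)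
    finally show ?thesis .
  next
    case False
    then show ?thesis
      using r by (smt (verit) mult_nonpos_nonneg zero_le_power2)
  qed
  then have \<sigma>H: "\<sigma> * H \<ge> \<bar>H\<bar> - \<delta>"
    unfolding \<sigma>_def using r by (simp add: pos_le_divide_eq power2_eq_square)
  have "\<sigma> * X \<le> \<bar>X\<bar>" for X
    using mult_right_mono[OF \<sigma> abs_ge_zero[of X]] abs_ge_self[of "\<sigma> * X"] by (simp add: abs_mult)
  then have "B * (\<sigma> * Hm) + D * (\<sigma> * Hp) - (B + D) * (\<sigma> * H)
      \<le> B * \<bar>Hm\<bar> + D * \<bar>Hp\<bar> - (B + D) * (\<bar>H\<bar> - \<delta>)"
    using \<sigma>H B D by (intro diff_mono add_mono mult_left_mono) auto
  then show ?thesis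
    unfolding \<sigma>_def[symmetric] r_def[symmetric] by (simp add: algebra_simps)
qed

lemma has_real_derivative_smoothed_abs:
  fixes f :: "real \<Rightarrow> real"
  assumes f: "(f has_real_derivative D) (at s)" and \<delta>: "\<delta> > 0"
  shows "((\<lambda>s. sqrt ((f s)\<^sup>2 + \<delta>\<^sup>2) - \<delta>) has_real_derivative
           (f s / sqrt ((f s)\<^sup>2 + \<delta>\<^sup>2)) * D) (at s)"
proof -
  have pos: "(f s)\<^sup>2 + \<delta>\<^sup>2 > 0"
    using \<delta> by (simp add: add_nonneg_pos)
  have "((\<lambda>s. sqrt ((f s)\<^sup>2 + \<delta>\<^sup>2) - \<delta>) has_real_derivative
          inverse (sqrt ((f s)\<^sup>2 + \<delta>\<^sup>2)) / 2 * (2 * (D * f s))) (at s)"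
    using pos f by (auto intro!: derivative_eq_intros)
  then show ?thesis
    by (simp add: field_simps)
qed

lemma le_of_le_add_pos_mult:
  fixes X Y c :: real
  assumes "\<And>\<delta>. \<delta> > 0 \<Longrightarrow> X \<le> Y + \<delta> * c" and "c \<ge> 0"
  shows "X \<le> Y"
proof (rule field_le_epsilon)
  fix e :: real assume e: "e > 0"
  have "e / (c + 1) > 0"
    using assms(2) e by simp
  then have "X \<le> Y + e / (c + 1) * c"
    by (rule assms(1))
  also have "e / (c + 1) * c \<le> e"
    using assms(2) e by (simp add: field_simps)
  finally show "X \<le> Y + e"
    by simp
qed

lemma le_of_le_add_div_nat:
  fixes X Y C :: real
  assumes "\<And>n::nat. n \<ge> 1 \<Longrightarrow> X \<le> Y + C / real n"
  shows "X \<le> Y"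
proof -
  have "(\<lambda>n. Y + C / real n) \<longlonglongrightarrow> Y"
    by real_asymp
  then show ?thesis
    using assms by (intro LIMSEQ_le_const[of "\<lambda>n. Y + C / real n"]) auto
qed

lemma sum_int_interval_telescope_left:
  fixes \<phi> :: "int \<Rightarrow> real"
  shows "(\<Sum>y\<in>{- int n..int n}. \<phi> (y - 1) - \<phi> y) = \<phi> (- int n - 1) - \<phi> (int n)"
proof (induction n)
  case (Suc n)
  have I: "{- int (Suc n)..int (Suc n)} = insert (- int n - 1) (insert (int n + 1) {- int n..int n})"
    by auto
  have "(\<Sum>y\<in>{- int (Suc n)..int (Suc n)}. \<phi> (y - 1) - \<phi> y)
      = (\<phi> (- int n - 1 - 1) - \<phi> (- int n - 1)) + ((\<phi> (int n + 1 - 1) - \<phi> (int n + 1))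
        + (\<Sum>y\<in>{- int n..int n}. \<phi> (y - 1) - \<phi> y))"
    unfolding I by (subst sum.insert; auto)+
  then show ?case
    using Suc by (simp add: add.commute)
qed simp

lemma sum_int_interval_telescope_right:
  fixes \<psi> :: "int \<Rightarrow> real"
  shows "(\<Sum>y\<in>{- int n..int n}. \<psi> (y + 1) - \<psi> y) = \<psi> (int n + 1) - \<psi> (- int n)"
  using sum_int_interval_telescope_left[of "\<lambda>y. - \<psi> (y + 1)" n] by simp

lemma min_abs_eq_sum_indicators:
  "min \<bar>(of_int z::real)\<bar> (real n)
     = (\<Sum>y\<in>{1..int n}. if y \<le> z then 1 else 0) + (\<Sum>y\<in>{- int n + 1..0}. if z < y then 1 else 0)"
proof (induction n)
  case (Suc n)
  have I: "{1..int (Suc n)} = insert (int n + 1) {1..int n}"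
    "{- int (Suc n) + 1..0} = insert (- int n) {- int n + 1..0}"
    by auto
  have "(\<Sum>y\<in>{1..int (Suc n)}. if y \<le> z then 1 else 0) + (\<Sum>y\<in>{- int (Suc n) + 1..0}. if z < y then 1 else 0)
      = (if int n + 1 \<le> z then 1 else 0) + (if z < - int n then 1 else 0)
        + ((\<Sum>y\<in>{1..int n}. if y \<le> z then 1 else 0) + (\<Sum>y\<in>{- int n + 1..0}. if z < y then 1 else 0) :: real)"
    unfolding I by (subst sum.insert; simp)+
  also have "\<dots> = (if int n + 1 \<le> z then 1 else 0) + (if z < - int n then 1 else 0) + min \<bar>(of_int z::real)\<bar> (real n)"
    using Suc by simp
  also have "\<dots> = min \<bar>(of_int z::real)\<bar> (real (Suc n))"
  proof (cases "int n + 1 \<le> z")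
    case True
    then have "real n + 1 \<le> of_int z"
      by linarith
    then show ?thesis
      using True by (simp add: min_def)
  next
    case False
    then show ?thesis
      by (cases "z < - int n") (auto simp: min_def)
  qed
  finally show ?case
    by simp
qed simp

lemma real_of_int_pos_part: "real_of_int (pos_part y) = (\<bar>of_int y\<bar> + of_int y) / 2"
  unfolding pos_part_def by (cases "y \<ge> 0") auto

lemma real_of_int_neg_part: "real_of_int (neg_part y) = (\<bar>of_int y\<bar> - of_int y) / 2"
  unfolding neg_part_def by (cases "y \<ge> 0") auto

locale birth_death_law =
  fixes \<alpha> \<beta> \<theta> :: real and x :: int and p :: "real \<Rightarrow> int \<Rightarrow> real"
  assumes alpha_pos: "\<alpha> > 0" and beta_pos: "\<beta> > 0" and theta_pos: "\<theta> > 0"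
    and law: "bd_law \<alpha> \<beta> \<theta> x p"
begin

definition b :: "int \<Rightarrow> real" where "b y = birth_rate \<alpha> \<theta> y"
definition d :: "int \<Rightarrow> real" where "d y = death_rate \<beta> \<theta> y"
definition dp :: "real \<Rightarrow> int \<Rightarrow> real" where
  "dp t y = b (y - 1) * p t (y - 1) + d (y + 1) * p t (y + 1) - (b y + d y) * p t y"
definition gen :: "(int \<Rightarrow> real) \<Rightarrow> int \<Rightarrow> real" where
  "gen g y = b y * (g (y + 1) - g y) + d y * (g (y - 1) - g y)"
definition E :: "(int \<Rightarrow> real) \<Rightarrow> real \<Rightarrow> real" where
  "E g t = (\<Sum>\<^sub>\<infinity>y. g y * p t y)"

lemma p_initial: "p 0 y = (if y = x then 1 else 0)"
  using law unfolding bd_law_def by blast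

lemma p_nonneg: "t \<ge> 0 \<Longrightarrow> p t y \<ge> 0"
  using law unfolding bd_law_def by blast

lemma p_has_sum: "t \<ge> 0 \<Longrightarrow> (p t has_sum 1) UNIV"
  using law unfolding bd_law_def by auto

lemma p_summable: "t \<ge> 0 \<Longrightarrow> p t summable_on UNIV"
  using p_has_sum has_sum_imp_summable by blast

lemma p_infsum: "t \<ge> 0 \<Longrightarrow> (\<Sum>\<^sub>\<infinity>y. p t y) = 1"
  using p_has_sum infsumI by blast

lemma p_continuous: "continuous_on {0..} (\<lambda>t. p t y)"
  using law unfolding bd_law_def by blast

lemma p_deriv: "t > 0 \<Longrightarrow> ((\<lambda>s. p s y) has_real_derivative dp t y) (at t)"
  using law unfolding bd_law_def dp_def b_def d_def by blast

lemma b_ge: "b y \<ge> \<alpha>" and d_ge: "d y \<ge> \<beta>"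
  using theta_pos by (auto simp: b_def d_def birth_rate_def death_rate_def neg_part_def pos_part_def)

lemma b_pos: "b y > 0" and d_pos: "d y > 0"
  using b_ge[of y] d_ge[of y] alpha_pos beta_pos by auto

lemma b_minus_d: "b y - d y = \<alpha> - \<beta> - \<theta> * of_int y"
  by (auto simp: b_def d_def birth_rate_def death_rate_def neg_part_def pos_part_def max_def algebra_simps)

lemma b_plus_d: "b y + d y = \<alpha> + \<beta> + \<theta> * \<bar>of_int y\<bar>"
  by (auto simp: b_def d_def birth_rate_def death_rate_def neg_part_def pos_part_def max_def algebra_simps)

lemma rate_increments: "b z - b (z - 1) + d (z - 1) - d z = - \<theta>"
  by (auto simp: b_def d_def birth_rate_def death_rate_def neg_part_def pos_part_def max_def algebra_simps)

lemma rate_sum_pos: "\<alpha> + \<beta> + \<theta> > 0"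
  using alpha_pos beta_pos theta_pos by simp

lemma b_le_affine: "b y \<le> (\<alpha> + \<beta> + \<theta>) * (1 + \<bar>of_int y\<bar>)"
  and d_le_affine: "d y \<le> (\<alpha> + \<beta> + \<theta>) * (1 + \<bar>of_int y\<bar>)"
proof -
  have "b y \<le> \<alpha> + \<theta> * \<bar>of_int y\<bar>" "d y \<le> \<beta> + \<theta> * \<bar>of_int y\<bar>"
    using b_plus_d[of y] b_ge[of y] d_ge[of y] by linarith+
  moreover have "\<theta> * \<bar>of_int y\<bar> \<le> (\<alpha> + \<beta> + \<theta>) * \<bar>of_int y\<bar>"
    using alpha_pos beta_pos by (intro mult_right_mono) auto
  moreover have "(\<alpha> + \<beta> + \<theta>) * (1 + \<bar>of_int y\<bar>) = \<alpha> + \<beta> + \<theta> + (\<alpha> + \<beta> + \<theta>) * \<bar>of_int y\<bar>"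
    by (simp add: algebra_simps)
  ultimately show "b y \<le> (\<alpha> + \<beta> + \<theta>) * (1 + \<bar>of_int y\<bar>)" "d y \<le> (\<alpha> + \<beta> + \<theta>) * (1 + \<bar>of_int y\<bar>)"
    using alpha_pos beta_pos theta_pos by linarith+
qed

text \<open>Summation by parts: the forward equation for \<open>p\<close> is dual to the generator \<open>gen\<close>.\<close>

lemma infsum_mult_dp:
  assumes s1: "(\<lambda>z. g (z + 1) * b z * p t z) summable_on UNIV"
    and s2: "(\<lambda>z. g (z - 1) * d z * p t z) summable_on UNIV"
    and s3: "(\<lambda>z. g z * (b z + d z) * p t z) summable_on UNIV"
  shows "(\<lambda>y. g y * dp t y) summable_on UNIV"
    and "(\<Sum>\<^sub>\<infinity>y. g y * dp t y) = (\<Sum>\<^sub>\<infinity>z. gen g z * p t z)"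
proof -
  define f1 where "f1 z = g (z + 1) * b z * p t z" for z
  define f2 where "f2 z = g (z - 1) * d z * p t z" for z
  define f3 where "f3 z = g z * (b z + d z) * p t z" for z
  have s: "f1 summable_on UNIV" "f2 summable_on UNIV" "f3 summable_on UNIV"
    using s1 s2 s3 unfolding f1_def f2_def f3_def .
  have bij: "bij_betw (\<lambda>y::int. y - 1) UNIV UNIV" "bij_betw (\<lambda>y::int. y + 1) UNIV UNIV"
    by (rule bij_betwI[where g = "\<lambda>y. y + 1"]; simp) (rule bij_betwI[where g = "\<lambda>y. y - 1"]; simp)
  have r1: "(\<lambda>y. f1 (y - 1)) summable_on UNIV" "(\<Sum>\<^sub>\<infinity>y. f1 (y - 1)) = infsum f1 UNIV"
    using summable_on_reindex_bij_betw[OF bij(1), of f1] infsum_reindex_bij_betw[OF bij(1), of f1] s(1)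
    by auto
  have r2: "(\<lambda>y. f2 (y + 1)) summable_on UNIV" "(\<Sum>\<^sub>\<infinity>y. f2 (y + 1)) = infsum f2 UNIV"
    using summable_on_reindex_bij_betw[OF bij(2), of f2] infsum_reindex_bij_betw[OF bij(2), of f2] s(2)
    by auto
  have eq: "g y * dp t y = f1 (y - 1) + f2 (y + 1) - f3 y" for y
    unfolding f1_def f2_def f3_def dp_def by (simp add: algebra_simps)
  have eq2: "gen g z * p t z = f1 z + f2 z - f3 z" for z
    unfolding f1_def f2_def f3_def gen_def by (simp add: algebra_simps)
  show "(\<lambda>y. g y * dp t y) summable_on UNIV"
    unfolding eq by (intro summable_on_diff_real summable_on_add r1 r2 s(3))
  have "(\<Sum>\<^sub>\<infinity>y. g y * dp t y) = infsum f1 UNIV + infsum f2 UNIV - infsum f3 UNIV"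
    unfolding eq by (simp add: infsum_diff_real infsum_add summable_on_add r1 r2 s(3))
  also have "\<dots> = (\<Sum>\<^sub>\<infinity>z. gen g z * p t z)"
    unfolding eq2 by (simp add: infsum_diff_real infsum_add summable_on_add s)
  finally show "(\<Sum>\<^sub>\<infinity>y. g y * dp t y) = (\<Sum>\<^sub>\<infinity>z. gen g z * p t z)" .
qed

lemma gen_le_abs_increments:
  "gen g y \<le> b y * \<bar>g (y + 1) - g y\<bar> + d y * \<bar>g (y - 1) - g y\<bar>"
proof -
  have "b y * (g (y + 1) - g y) \<le> b y * \<bar>g (y + 1) - g y\<bar>"
    "d y * (g (y - 1) - g y) \<le> d y * \<bar>g (y - 1) - g y\<bar>"
    using b_pos[of y] d_pos[of y] by (simp_all add: mult_left_mono)
  then show ?thesis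
    unfolding gen_def by linarith
qed

lemma gen_add_const: "gen (\<lambda>y. g y + c) = gen g"
  unfolding gen_def by (rule ext) (simp add: algebra_simps)

lemma E_initial: "E g 0 = g x"
proof -
  have "E g 0 = (\<Sum>\<^sub>\<infinity>y\<in>{x}. g y * p 0 y)"
    unfolding E_def by (rule infsum_cong_neutral) (auto simp: p_initial)
  then show ?thesis
    by (simp add: p_initial)
qed

lemma summable_bounded_mult_p:
  assumes "t \<ge> 0" "\<And>y. \<bar>g y\<bar> \<le> B"
  shows "(\<lambda>y. g y * p t y) summable_on UNIV"
proof (rule summable_on_abs_le)
  show "(\<lambda>y. B * p t y) summable_on UNIV"
    using p_summable[OF assms(1)] by (rule summable_on_cmult_right)
  show "\<bar>g y * p t y\<bar> \<le> B * p t y" for y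
    using assms(2)[of y] p_nonneg[OF assms(1), of y] by (simp add: abs_mult mult_right_mono)
qed

lemma E_add_const:
  assumes "t \<ge> 0" "(\<lambda>y. g y * p t y) summable_on UNIV"
  shows "E (\<lambda>y. g y + c) t = E g t + c"
proof -
  have "E (\<lambda>y. g y + c) t = (\<Sum>\<^sub>\<infinity>y. g y * p t y + c * p t y)"
    unfolding E_def by (simp add: algebra_simps)
  also have "\<dots> = E g t + c * (\<Sum>\<^sub>\<infinity>y. p t y)"
    unfolding E_def using assms p_summable
    by (simp add: infsum_add summable_on_cmult_right infsum_cmult_right')
  finally show ?thesis
    using p_infsum[OF assms(1)] by simp
qed

lemma E_finite_support:
  assumes "\<And>y. \<bar>y\<bar> > int n \<Longrightarrow> g y = 0"
  shows "E g t = (\<Sum>y\<in>{-int n..int n}. g y * p t y)"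
  unfolding E_def using assms by (intro infsum_int_finite_support) auto

lemma continuous_on_E_finite_support:
  assumes "\<And>y. \<bar>y\<bar> > int n \<Longrightarrow> g y = 0"
  shows "continuous_on {0..} (E g)"
proof -
  have "continuous_on {0..} (\<lambda>t. \<Sum>y\<in>{-int n..int n}. g y * p t y)"
    by (intro continuous_intros p_continuous)
  then show ?thesis
    using E_finite_support[OF assms] by (simp add: fun_eq_iff)
qed

lemma E_finite_support_has_derivative:
  assumes "\<And>y. \<bar>y\<bar> > int n \<Longrightarrow> g y = 0" and t: "t > 0"
  shows "(E g has_real_derivative (\<Sum>\<^sub>\<infinity>z. gen g z * p t z)) (at t)"
proof -
  have "((\<lambda>s. \<Sum>y\<in>{-int n..int n}. g y * p s y) has_real_derivative
          (\<Sum>y\<in>{-int n..int n}. g y * dp t y)) (at t)"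
    by (intro DERIV_sum DERIV_cmult p_deriv t)
  moreover have "(\<Sum>y\<in>{-int n..int n}. g y * dp t y) = (\<Sum>\<^sub>\<infinity>y. g y * dp t y)"
    using assms by (intro infsum_int_finite_support[symmetric]) auto
  moreover have "(\<Sum>\<^sub>\<infinity>y. g y * dp t y) = (\<Sum>\<^sub>\<infinity>z. gen g z * p t z)"
    by (rule infsum_mult_dp(2); rule summable_on_int_finite_support[of "n + 1"]) (use assms in auto)
  moreover have "E g = (\<lambda>s. \<Sum>y\<in>{-int n..int n}. g y * p s y)"
    using E_finite_support[OF assms(1)] by (simp add: fun_eq_iff)
  ultimately show ?thesis
    by simp
qed

subsection \<open>A bound on the fourth moment\<close>

text \<open>\<open>C4\<close> is the rate in the differential inequality \<open>gen_trunc4_le\<close> for truncated fourth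
  moments, and \<open>K4 t\<close> the resulting bound on \<open>1 + E X(t)\<^sup>4\<close>.\<close>

definition C4 :: real where "C4 = 90 * (\<alpha> + \<beta> + \<theta>)"
definition K4 :: "real \<Rightarrow> real" where "K4 t = (1 + \<bar>of_int x\<bar> ^ 4) * exp (C4 * t)"
definition trunc4 :: "nat \<Rightarrow> int \<Rightarrow> real" where "trunc4 N y = min (\<bar>of_int y\<bar> ^ 4) (real N ^ 4)"
definition w4 :: "int \<Rightarrow> real" where "w4 y = 1 + \<bar>of_int y\<bar> ^ 4"

lemma C4_pos: "C4 > 0"
  using rate_sum_pos unfolding C4_def by simp

lemma K4_pos: "K4 t > 0"
  unfolding K4_def by (simp add: add_pos_nonneg)

lemma K4_mono: "s \<le> t \<Longrightarrow> K4 s \<le> K4 t"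
  unfolding K4_def using C4_pos by (intro mult_left_mono) (auto intro: mult_left_mono)

lemma trunc4_le: "trunc4 N y \<le> real N ^ 4"
  and trunc4_nonneg: "trunc4 N y \<ge> 0"
  and trunc4_le_pow: "trunc4 N y \<le> \<bar>of_int y\<bar> ^ 4"
  unfolding trunc4_def by auto

lemma trunc4_inside: "\<bar>y\<bar> \<le> int N \<Longrightarrow> trunc4 N y = (of_int y) ^ 4"
  using power_mono[of "\<bar>of_int y :: real\<bar>" "real N" 4]
  by (simp add: trunc4_def power_even_abs min_def)

lemma trunc4_outside: "\<bar>y\<bar> \<ge> int N \<Longrightarrow> trunc4 N y = real N ^ 4"
  using power_mono[of "real N" "\<bar>of_int y :: real\<bar>" 4] by (simp add: trunc4_def)

lemma gen_trunc4_le: "gen (trunc4 N) y \<le> C4 * (1 + trunc4 N y)"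
proof (cases "\<bar>y\<bar> < int N")
  case True
  define u where "u = \<bar>(of_int y::real)\<bar>"
  have u: "u \<ge> 0" "u \<le> 1 + u ^ 4" "u ^ 3 \<le> 1 + u ^ 4"
    unfolding u_def using power_le_one_plus_power[of u 1 4] power_le_one_plus_power[of u 3 4]
    by (auto simp: u_def)
  have inside: "trunc4 N (y + 1) = (of_int y + 1) ^ 4" "trunc4 N (y - 1) = (of_int y - 1) ^ 4"
    "trunc4 N y = u ^ 4"
    using True by (auto simp: trunc4_inside u_def power_even_abs)
  have "\<bar>trunc4 N (y + 1) - trunc4 N y\<bar> \<le> 15 * (1 + u ^ 3)"
    "\<bar>trunc4 N (y - 1) - trunc4 N y\<bar> \<le> 15 * (1 + u ^ 3)"
    unfolding inside u_def
    using abs_fourth_power_increment[of "of_int y"] abs_fourth_power_decrement[of "of_int y"]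
    by (simp_all add: power_even_abs)
  moreover have "b y \<le> (\<alpha> + \<beta> + \<theta>) * (1 + u)" "d y \<le> (\<alpha> + \<beta> + \<theta>) * (1 + u)"
    unfolding u_def using b_le_affine d_le_affine by auto
  ultimately have "gen (trunc4 N) y
      \<le> (\<alpha> + \<beta> + \<theta>) * (1 + u) * (15 * (1 + u ^ 3)) + (\<alpha> + \<beta> + \<theta>) * (1 + u) * (15 * (1 + u ^ 3))"
    using gen_le_abs_increments[of "trunc4 N" y] b_pos[of y] d_pos[of y]
    by (smt (verit, best) abs_ge_zero mult_mono)
  also have "\<dots> = 30 * (\<alpha> + \<beta> + \<theta>) * (1 + u + u ^ 3 + u ^ 4)"
    by algebra
  also have "\<dots> \<le> 30 * (\<alpha> + \<beta> + \<theta>) * (3 * (1 + u ^ 4))"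
    using u rate_sum_pos by (intro mult_left_mono) auto
  also have "\<dots> = C4 * (1 + trunc4 N y)"
    unfolding C4_def inside by (simp add: algebra_simps)
  finally show ?thesis .
next
  case False
  then have "trunc4 N y = real N ^ 4"
    by (intro trunc4_outside) simp
  then have "gen (trunc4 N) y \<le> 0"
    unfolding gen_def using trunc4_le[of N] b_pos[of y] d_pos[of y]
    by (smt (verit, best) mult_nonneg_nonpos)
  also have "0 \<le> C4 * (1 + trunc4 N y)"
    using C4_pos trunc4_nonneg[of N y] by simp
  finally show ?thesis .
qed

lemma summable_trunc4: "t \<ge> 0 \<Longrightarrow> (\<lambda>y. trunc4 N y * p t y) summable_on UNIV"
  using trunc4_le[of N] trunc4_nonneg[of N] by (intro summable_bounded_mult_p[where B = "real N ^ 4"]) auto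

text \<open>Up to a constant, \<open>trunc4 N\<close> has finite support, so its expectation inherits regularity
  from finitely many coordinates of \<open>p\<close>.\<close>

lemma E_trunc4_eq:
  assumes "s \<ge> 0"
  shows "E (trunc4 N) s = E (\<lambda>y. trunc4 N y - real N ^ 4) s + real N ^ 4"
proof -
  have "(\<lambda>y. (trunc4 N y - real N ^ 4) * p s y) summable_on UNIV"
    using trunc4_outside[of N] by (intro summable_on_int_finite_support[of N]) auto
  then show ?thesis
    using E_add_const[OF assms, of "\<lambda>y. trunc4 N y - real N ^ 4" "real N ^ 4"] by simp
qed

lemma trunc4_shift_finite_support: "\<bar>y\<bar> > int N \<Longrightarrow> trunc4 N y - real N ^ 4 = 0"
  using trunc4_outside[of N y] by simp

lemma continuous_on_E_trunc4: "continuous_on {0..} (E (trunc4 N))"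
proof -
  have "continuous_on {0..} (\<lambda>s. E (\<lambda>y. trunc4 N y - real N ^ 4) s + real N ^ 4)"
    using trunc4_shift_finite_support
    by (intro continuous_intros continuous_on_E_finite_support[of N]) auto
  then show ?thesis
    by (rule continuous_on_eq) (simp add: E_trunc4_eq)
qed

lemma E_trunc4_has_derivative:
  assumes "s > 0"
  shows "(E (trunc4 N) has_real_derivative (\<Sum>\<^sub>\<infinity>z. gen (trunc4 N) z * p s z)) (at s)"
proof -
  have "gen (\<lambda>y. trunc4 N y - real N ^ 4) = gen (trunc4 N)"
    using gen_add_const[of "trunc4 N" "- (real N ^ 4)"] by simp
  moreover have "(E (\<lambda>y. trunc4 N y - real N ^ 4) has_real_derivative
      (\<Sum>\<^sub>\<infinity>z. gen (\<lambda>y. trunc4 N y - real N ^ 4) z * p s z)) (at s)"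
    by (rule E_finite_support_has_derivative[OF _ assms]) (rule trunc4_shift_finite_support)
  ultimately have der: "((\<lambda>s. E (\<lambda>y. trunc4 N y - real N ^ 4) s + real N ^ 4) has_real_derivative
      (\<Sum>\<^sub>\<infinity>z. gen (trunc4 N) z * p s z)) (at s)"
    using DERIV_add[OF _ DERIV_const[of "real N ^ 4"]] by fastforce
  have "eventually (\<lambda>r. r \<in> {0<..}) (nhds s)"
    using assms by (intro eventually_nhds_in_open) auto
  then have ev: "eventually (\<lambda>r. E (\<lambda>y. trunc4 N y - real N ^ 4) r + real N ^ 4 = E (trunc4 N) r) (nhds s)"
    by eventually_elim (simp add: E_trunc4_eq)
  show ?thesis
    using DERIV_cong_ev[OF refl ev refl] der by blast
qed

lemma infsum_gen_trunc4_le: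
  assumes "s \<ge> 0"
  shows "(\<Sum>\<^sub>\<infinity>z. gen (trunc4 N) z * p s z) \<le> C4 + C4 * E (trunc4 N) s"
proof -
  have "(\<lambda>z. gen (trunc4 N) z * p s z) summable_on UNIV"
  proof (rule summable_on_int_finite_support[of "N + 1"])
    fix z :: int assume "\<bar>z\<bar> > int (N + 1)"
    then show "gen (trunc4 N) z * p s z = 0"
      unfolding gen_def by (simp add: trunc4_outside)
  qed
  moreover have "(\<lambda>z. C4 * p s z + C4 * (trunc4 N z * p s z)) summable_on UNIV"
    using assms by (intro summable_on_add summable_on_cmult_right p_summable summable_trunc4)
  ultimately have "(\<Sum>\<^sub>\<infinity>z. gen (trunc4 N) z * p s z) \<le> (\<Sum>\<^sub>\<infinity>z. C4 * p s z + C4 * (trunc4 N z * p s z))"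
    using mult_right_mono[OF gen_trunc4_le p_nonneg[OF assms]]
    by (intro infsum_mono) (auto simp: algebra_simps)
  also have "\<dots> = C4 * (\<Sum>\<^sub>\<infinity>z. p s z) + C4 * E (trunc4 N) s"
    unfolding E_def using assms
    by (simp add: infsum_add summable_on_cmult_right p_summable summable_trunc4 infsum_cmult_right')
  finally show ?thesis
    using p_infsum[OF assms] by simp
qed

lemma E_trunc4_bound:
  assumes t: "t \<ge> 0"
  shows "1 + E (trunc4 N) t \<le> K4 t"
proof -
  have "E (trunc4 N) t \<le> C4 / (- C4) + (E (trunc4 N) 0 - C4 / (- C4)) * exp (- (- C4) * (t - 0))"
  proof (rule linear_ode_upper_bound[OF t])
    show "continuous_on {0..t} (E (trunc4 N))"
      using continuous_on_E_trunc4 by (rule continuous_on_subset) auto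
  qed (use C4_pos E_trunc4_has_derivative infsum_gen_trunc4_le in auto)
  moreover have E0: "E (trunc4 N) 0 \<le> \<bar>of_int x\<bar> ^ 4"
    using E_initial trunc4_le_pow by simp
  ultimately have "E (trunc4 N) t \<le> -1 + (E (trunc4 N) 0 + 1) * exp (C4 * t)"
    using C4_pos by simp
  also have "\<dots> \<le> -1 + (\<bar>of_int x\<bar> ^ 4 + 1) * exp (C4 * t)"
    using E0 by (intro add_left_mono mult_right_mono) auto
  finally show ?thesis
    unfolding K4_def by (simp add: algebra_simps)
qed

lemma sum_w4_le:
  assumes t: "t \<ge> 0" and F: "finite F"
  shows "(\<Sum>y\<in>F. w4 y * p t y) \<le> K4 t"
proof -
  define N where "N = (\<Sum>y\<in>F. nat \<bar>y\<bar>)"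
  have "\<bar>y\<bar> \<le> int N" if "y \<in> F" for y
  proof -
    have "nat \<bar>y\<bar> \<le> N"
      unfolding N_def using member_le_sum[OF that _ F, of "\<lambda>y. nat \<bar>y\<bar>"] by simp
    then show ?thesis
      by linarith
  qed
  then have "(\<Sum>y\<in>F. w4 y * p t y) = (\<Sum>y\<in>F. (1 + trunc4 N y) * p t y)"
    unfolding w4_def by (intro sum.cong) (auto simp: trunc4_inside power_even_abs)
  also have "\<dots> \<le> (\<Sum>\<^sub>\<infinity>y. (1 + trunc4 N y) * p t y)"
    using t p_nonneg trunc4_nonneg trunc4_le[of N]
    by (intro finite_sum_le_infsum[OF _ F] summable_bounded_mult_p[where B = "1 + real N ^ 4"]) auto
  also have "\<dots> = 1 + E (trunc4 N) t"
    using E_add_const[OF t summable_trunc4[OF t], where c = 1] unfolding E_def by (simp add: add.commute)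
  also have "\<dots> \<le> K4 t"
    by (rule E_trunc4_bound[OF t])
  finally show ?thesis .
qed

lemma summable_w4: "t \<ge> 0 \<Longrightarrow> (\<lambda>y. w4 y * p t y) summable_on UNIV"
  using sum_w4_le p_nonneg unfolding w4_def
  by (intro nonneg_bdd_above_summable_on bdd_aboveI[where M = "K4 t"]) auto

lemma infsum_w4_le: "t \<ge> 0 \<Longrightarrow> (\<Sum>\<^sub>\<infinity>y. w4 y * p t y) \<le> K4 t"
  using sum_w4_le by (intro infsum_le_finite_sums summable_w4) auto

subsection \<open>Differentiating expectations of functions of quadratic growth\<close>

definition w3 :: "int \<Rightarrow> real" where "w3 y = 1 + \<bar>of_int y\<bar> ^ 3"

lemma w3_pos: "w3 y > 0"
  unfolding w3_def by (simp add: add_pos_nonneg)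

lemma w4_pos: "w4 y > 0"
  unfolding w4_def by (simp add: add_pos_nonneg)

lemma w3_le_w4: "w3 y \<le> 2 * w4 y"
proof -
  have "\<bar>of_int y :: real\<bar> ^ 3 \<le> 1 + \<bar>of_int y\<bar> ^ 4"
    by (rule power_le_one_plus_power) auto
  moreover have "0 \<le> \<bar>of_int y :: real\<bar> ^ 4" "2 * w4 y = 2 + 2 * \<bar>of_int y\<bar> ^ 4"
    unfolding w4_def by simp_all
  ultimately show ?thesis
    unfolding w3_def by linarith
qed

lemma one_plus_sq_le_w3: "1 + (of_int y :: real)\<^sup>2 \<le> 2 * w3 y"
proof -
  have "\<bar>of_int y :: real\<bar>\<^sup>2 \<le> 1 + \<bar>of_int y\<bar> ^ 3"
    by (rule power_le_one_plus_power) auto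
  moreover have "0 \<le> \<bar>of_int y :: real\<bar> ^ 3" "(of_int y :: real)\<^sup>2 = \<bar>of_int y\<bar>\<^sup>2"
    "2 * w3 y = 2 + 2 * \<bar>of_int y\<bar> ^ 3"
    unfolding w3_def by simp_all
  ultimately show ?thesis
    by linarith
qed

lemma w3_le_w4_div:
  assumes "n \<ge> 1" "real n \<le> \<bar>of_int y\<bar>"
  shows "w3 y \<le> (2 / real n) * w4 y"
proof -
  define u where "u = \<bar>(of_int y::real)\<bar>"
  have u: "real n \<le> u" "1 \<le> u"
    using assms unfolding u_def by linarith+
  have "real n \<le> u ^ 4"
    using u by (smt (verit) power_increasing power_one_right numeral_le_iff semiring_norm(69) one_le_numeral)
  moreover have "real n * u ^ 3 \<le> u ^ 4"
    using mult_right_mono[OF u(1), of "u ^ 3"] u by (simp add: power_eq_if)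
  ultimately have "real n * w3 y \<le> 2 * w4 y"
    unfolding w3_def w4_def u_def[symmetric] by (simp add: algebra_simps)
  then show ?thesis
    using assms by (simp add: field_simps)
qed

lemma summable_w4_bounded:
  assumes t: "t \<ge> 0" and h: "\<And>y. \<bar>h y\<bar> \<le> c * w4 y"
  shows "(\<lambda>y. h y * p t y) summable_on UNIV"
proof (rule summable_on_abs_le)
  show "(\<lambda>y. c * (w4 y * p t y)) summable_on UNIV"
    by (rule summable_on_cmult_right[OF summable_w4[OF t]])
  show "\<bar>h y * p t y\<bar> \<le> c * (w4 y * p t y)" for y
    using h[of y] p_nonneg[OF t, of y] by (simp add: abs_mult mult_right_mono mult.assoc[symmetric])
qed

lemma summable_tail_w3:
  assumes t: "t \<ge> 0"
  shows "(\<lambda>y. if real n \<le> \<bar>of_int y\<bar> then w3 y * p t y else 0) summable_on UNIV"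
proof (rule summable_on_abs_le[OF summable_on_cmult_right[OF summable_w4[OF t]]])
  show "\<bar>if real n \<le> \<bar>of_int y\<bar> then w3 y * p t y else 0\<bar> \<le> 2 * (w4 y * p t y)" for y
    using mult_right_mono[OF w3_le_w4 p_nonneg[OF t], of y y] w3_pos[of y] p_nonneg[OF t, of y] w4_pos[of y]
    by (auto simp: abs_mult)
qed

lemma infsum_tail_w3_le:
  assumes t: "t \<ge> 0" and n: "n \<ge> 1"
  shows "(\<Sum>\<^sub>\<infinity>y. if real n \<le> \<bar>of_int y\<bar> then w3 y * p t y else 0) \<le> 2 * K4 t / real n"
proof -
  have "(\<Sum>\<^sub>\<infinity>y. if real n \<le> \<bar>of_int y\<bar> then w3 y * p t y else 0) \<le> (\<Sum>\<^sub>\<infinity>y. (2 / real n) * (w4 y * p t y))"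
  proof (rule infsum_mono[OF summable_tail_w3[OF t] summable_on_cmult_right[OF summable_w4[OF t]]])
    show "(if real n \<le> \<bar>of_int y\<bar> then w3 y * p t y else 0) \<le> (2 / real n) * (w4 y * p t y)" for y
      using mult_right_mono[OF w3_le_w4_div[OF n] p_nonneg[OF t], of y y] p_nonneg[OF t, of y] w4_pos[of y]
      by (auto simp: mult.assoc)
  qed
  also have "\<dots> = (2 / real n) * (\<Sum>\<^sub>\<infinity>y. w4 y * p t y)"
    by (rule infsum_cmult_right')
  also have "\<dots> \<le> (2 / real n) * K4 t"
    by (rule mult_left_mono[OF infsum_w4_le[OF t]]) simp
  finally show ?thesis
    by simp
qed

lemma quadratic_growth_const_nonneg:
  fixes g :: "int \<Rightarrow> real"
  assumes "\<And>y. \<bar>g y\<bar> \<le> Cf * (1 + (of_int y)\<^sup>2)"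
  shows "Cf \<ge> 0"
proof -
  have "\<bar>g 0\<bar> \<le> Cf"
    using assms[of 0] by simp
  then show ?thesis
    using abs_ge_zero[of "g 0"] by linarith
qed

lemma gen_terms_le:
  assumes g: "\<And>y. \<bar>g y\<bar> \<le> Cf * (1 + (of_int y)\<^sup>2)"
  shows "\<bar>g (z + 1)\<bar> * b z \<le> 10 * (\<alpha> + \<beta> + \<theta>) * Cf * w3 z"
    and "\<bar>g (z - 1)\<bar> * d z \<le> 10 * (\<alpha> + \<beta> + \<theta>) * Cf * w3 z"
    and "\<bar>g z\<bar> * (b z + d z) \<le> 10 * (\<alpha> + \<beta> + \<theta>) * Cf * w3 z"
proof -
  define A where "A = \<alpha> + \<beta> + \<theta>"
  define u where "u = \<bar>(of_int z :: real)\<bar>"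
  have u: "u \<ge> 0" and w: "w3 z = 1 + u ^ 3"
    unfolding u_def w3_def by simp_all
  have Cf: "Cf \<ge> 0" and A: "A > 0"
    using quadratic_growth_const_nonneg[OF g] rate_sum_pos unfolding A_def by auto
  have rates: "b z \<le> A * (1 + u)" "d z \<le> A * (1 + u)" "b z + d z \<le> 2 * (A * (1 + u))"
    unfolding A_def u_def using b_le_affine[of z] d_le_affine[of z] by auto
  have "(of_int (z + 1) :: real)\<^sup>2 \<le> (u + 1)\<^sup>2" "(of_int (z - 1) :: real)\<^sup>2 \<le> (u + 1)\<^sup>2"
    using sq_shift_le[of "of_int z"] unfolding u_def by simp_all
  then have "Cf * (1 + (of_int (z + 1))\<^sup>2) \<le> Cf * (1 + (u + 1)\<^sup>2)"
    "Cf * (1 + (of_int (z - 1))\<^sup>2) \<le> Cf * (1 + (u + 1)\<^sup>2)"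
    using Cf by (simp_all add: mult_left_mono)
  then have shifted: "\<bar>g (z + 1)\<bar> \<le> Cf * (1 + (u + 1)\<^sup>2)" "\<bar>g (z - 1)\<bar> \<le> Cf * (1 + (u + 1)\<^sup>2)"
    using g[of "z + 1"] g[of "z - 1"] by linarith+
  have majorant: "A * Cf * ((1 + (u + 1)\<^sup>2) * (1 + u)) \<le> A * Cf * (10 * (1 + u ^ 3))"
    "A * Cf * (2 * ((1 + u\<^sup>2) * (1 + u))) \<le> A * Cf * (10 * (1 + u ^ 3))"
    using cubic_majorants[OF u] A Cf by (simp_all add: mult_left_mono)
  have "\<bar>g (z + 1)\<bar> * b z \<le> (Cf * (1 + (u + 1)\<^sup>2)) * (A * (1 + u))"
    by (rule mult_mono[OF shifted(1) rates(1)]) (use Cf b_pos[of z] in auto)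
  with majorant(1) show "\<bar>g (z + 1)\<bar> * b z \<le> 10 * (\<alpha> + \<beta> + \<theta>) * Cf * w3 z"
    unfolding w A_def by (simp add: algebra_simps)
  have "\<bar>g (z - 1)\<bar> * d z \<le> (Cf * (1 + (u + 1)\<^sup>2)) * (A * (1 + u))"
    by (rule mult_mono[OF shifted(2) rates(2)]) (use Cf d_pos[of z] in auto)
  with majorant(1) show "\<bar>g (z - 1)\<bar> * d z \<le> 10 * (\<alpha> + \<beta> + \<theta>) * Cf * w3 z"
    unfolding w A_def by (simp add: algebra_simps)
  have "\<bar>g z\<bar> \<le> Cf * (1 + u\<^sup>2)"
    using g[of z] unfolding u_def by simp
  then have "\<bar>g z\<bar> * (b z + d z) \<le> (Cf * (1 + u\<^sup>2)) * (2 * (A * (1 + u)))"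
    by (rule mult_mono[OF _ rates(3)]) (use Cf b_pos[of z] d_pos[of z] in auto)
  with majorant(2) show "\<bar>g z\<bar> * (b z + d z) \<le> 10 * (\<alpha> + \<beta> + \<theta>) * Cf * w3 z"
    unfolding w A_def by (simp add: algebra_simps)
qed

lemma abs_gen_le:
  assumes g: "\<And>y. \<bar>g y\<bar> \<le> Cf * (1 + (of_int y)\<^sup>2)"
  shows "\<bar>gen g z\<bar> \<le> 30 * (\<alpha> + \<beta> + \<theta>) * Cf * w3 z"
proof -
  have "\<bar>b z * (g (z + 1) - g z)\<bar> \<le> b z * (\<bar>g (z + 1)\<bar> + \<bar>g z\<bar>)"
    "\<bar>d z * (g (z - 1) - g z)\<bar> \<le> d z * (\<bar>g (z - 1)\<bar> + \<bar>g z\<bar>)"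
    using b_pos[of z] d_pos[of z] by (simp_all add: abs_mult mult_left_mono abs_triangle_ineq4)
  then have "\<bar>gen g z\<bar> \<le> \<bar>g (z + 1)\<bar> * b z + \<bar>g (z - 1)\<bar> * d z + \<bar>g z\<bar> * (b z + d z)"
    unfolding gen_def using abs_triangle_ineq[of "b z * (g (z + 1) - g z)" "d z * (g (z - 1) - g z)"]
    by (simp add: algebra_simps)
  then show ?thesis
    using gen_terms_le[OF g, of z] by linarith
qed

lemma infsum_mult_dp_quadratic:
  assumes t: "t \<ge> 0" and g: "\<And>y. \<bar>g y\<bar> \<le> Cf * (1 + (of_int y)\<^sup>2)"
  shows "(\<lambda>y. g y * dp t y) summable_on UNIV"
    and "(\<Sum>\<^sub>\<infinity>y. g y * dp t y) = (\<Sum>\<^sub>\<infinity>z. gen g z * p t z)"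
    and "(\<lambda>z. gen g z * p t z) summable_on UNIV"
proof -
  define c where "c = 20 * (\<alpha> + \<beta> + \<theta>) * Cf"
  have Cf: "Cf \<ge> 0"
    by (rule quadratic_growth_const_nonneg[OF g])
  have nonneg: "0 \<le> 10 * (\<alpha> + \<beta> + \<theta>) * Cf"
    using rate_sum_pos Cf by simp
  have c: "10 * (\<alpha> + \<beta> + \<theta>) * Cf * w3 z \<le> c * w4 z" for z
    using mult_left_mono[OF w3_le_w4 nonneg, of z] unfolding c_def by (simp add: algebra_simps)
  have s1: "(\<lambda>z. g (z + 1) * b z * p t z) summable_on UNIV"
  proof (rule summable_w4_bounded[OF t, where c = c])
    show "\<bar>g (z + 1) * b z\<bar> \<le> c * w4 z" for z
      using gen_terms_le(1)[OF g, of z] c[of z] b_pos[of z] by (simp add: abs_mult)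
  qed
  have s2: "(\<lambda>z. g (z - 1) * d z * p t z) summable_on UNIV"
  proof (rule summable_w4_bounded[OF t, where c = c])
    show "\<bar>g (z - 1) * d z\<bar> \<le> c * w4 z" for z
      using gen_terms_le(2)[OF g, of z] c[of z] d_pos[of z] by (simp add: abs_mult)
  qed
  have s3: "(\<lambda>z. g z * (b z + d z) * p t z) summable_on UNIV"
  proof (rule summable_w4_bounded[OF t, where c = c])
    show "\<bar>g z * (b z + d z)\<bar> \<le> c * w4 z" for z
      using gen_terms_le(3)[OF g, of z] c[of z] b_pos[of z] d_pos[of z] by (simp add: abs_mult)
  qed
  show "(\<lambda>y. g y * dp t y) summable_on UNIV"
    by (rule infsum_mult_dp(1)[OF s1 s2 s3])
  show "(\<Sum>\<^sub>\<infinity>y. g y * dp t y) = (\<Sum>\<^sub>\<infinity>z. gen g z * p t z)"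
    by (rule infsum_mult_dp(2)[OF s1 s2 s3])
  show "(\<lambda>z. gen g z * p t z) summable_on UNIV"
  proof (rule summable_w4_bounded[OF t, where c = "3 * c"])
    fix z
    have "\<bar>gen g z\<bar> \<le> 30 * (\<alpha> + \<beta> + \<theta>) * Cf * w3 z"
      by (rule abs_gen_le[OF g])
    also have "\<dots> = 3 * (10 * (\<alpha> + \<beta> + \<theta>) * Cf * w3 z)"
      by simp
    also have "\<dots> \<le> 3 * (c * w4 z)"
      using c[of z] by simp
    finally show "\<bar>gen g z\<bar> \<le> 3 * c * w4 z"
      by simp
  qed
qed

lemma abs_infsum_tail_le:
  assumes t: "t \<ge> 0" and n: "n \<ge> 1" and C: "C \<ge> 0"
    and out: "\<And>z. real n \<le> \<bar>of_int z\<bar> \<Longrightarrow> \<bar>h z\<bar> \<le> C * w3 z"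
    and inside: "\<And>z. \<bar>of_int z\<bar> < real n \<Longrightarrow> h z = 0"
  shows "\<bar>\<Sum>\<^sub>\<infinity>z. h z * p t z\<bar> \<le> C * (2 * K4 t / real n)"
proof -
  have "\<bar>h z * p t z\<bar> \<le> C * (if real n \<le> \<bar>of_int z\<bar> then w3 z * p t z else 0)" for z
    using out[of z] inside[of z] mult_right_mono[OF out p_nonneg[OF t], of z z] p_nonneg[OF t, of z]
    by (cases "real n \<le> \<bar>of_int z\<bar>") (auto simp: abs_mult mult.assoc)
  then have "\<bar>\<Sum>\<^sub>\<infinity>z. h z * p t z\<bar> \<le> (\<Sum>\<^sub>\<infinity>z. C * (if real n \<le> \<bar>of_int z\<bar> then w3 z * p t z else 0))"
    by (intro abs_infsum_le summable_on_cmult_right summable_tail_w3[OF t])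
  also have "\<dots> = C * (\<Sum>\<^sub>\<infinity>z. if real n \<le> \<bar>of_int z\<bar> then w3 z * p t z else 0)"
    by (rule infsum_cmult_right')
  also have "\<dots> \<le> C * (2 * K4 t / real n)"
    by (rule mult_left_mono[OF infsum_tail_w3_le[OF t n] C])
  finally show ?thesis .
qed

definition outside :: "nat \<Rightarrow> (int \<Rightarrow> real) \<Rightarrow> int \<Rightarrow> real" where
  "outside n g y = (if \<bar>y\<bar> \<le> int n then 0 else g y)"

lemma outside_quadratic:
  assumes g: "\<And>y. \<bar>g y\<bar> \<le> Cf * (1 + (of_int y)\<^sup>2)"
  shows "\<bar>outside n g y\<bar> \<le> Cf * (1 + (of_int y)\<^sup>2)"
  using g[of y] quadratic_growth_const_nonneg[OF g] unfolding outside_def by auto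

lemma summable_quadratic:
  assumes t: "t \<ge> 0" and g: "\<And>y. \<bar>g y\<bar> \<le> Cf * (1 + (of_int y)\<^sup>2)"
  shows "(\<lambda>y. g y * p t y) summable_on UNIV"
proof (rule summable_w4_bounded[OF t, where c = "4 * Cf"])
  have bound: "Cf * (1 + (of_int y)\<^sup>2) \<le> Cf * (4 * w4 y)" for y
    using one_plus_sq_le_w3[of y] w3_le_w4[of y] quadratic_growth_const_nonneg[OF g]
    by (intro mult_left_mono) auto
  show "\<bar>g y\<bar> \<le> 4 * Cf * w4 y" for y
    using order_trans[OF g[of y] bound[of y]] by (simp add: ac_simps)
qed

lemma abs_E_outside_le:
  assumes t: "t \<ge> 0" and n: "n \<ge> 1" and g: "\<And>y. \<bar>g y\<bar> \<le> Cf * (1 + (of_int y)\<^sup>2)"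
  shows "\<bar>E (outside n g) t\<bar> \<le> 2 * Cf * (2 * K4 t / real n)"
  unfolding E_def
proof (rule abs_infsum_tail_le[OF t n])
  show "2 * Cf \<ge> 0"
    using quadratic_growth_const_nonneg[OF g] by simp
  fix z
  have "\<bar>outside n g z\<bar> \<le> Cf * (1 + (of_int z)\<^sup>2)"
    by (rule outside_quadratic[OF g])
  also have "\<dots> \<le> Cf * (2 * w3 z)"
    by (rule mult_left_mono[OF one_plus_sq_le_w3 quadratic_growth_const_nonneg[OF g]])
  finally show "\<bar>outside n g z\<bar> \<le> 2 * Cf * w3 z"
    by (simp add: ac_simps)
next
  show "outside n g z = 0" if "\<bar>of_int z\<bar> < real n" for z
    using that unfolding outside_def by simp
qed

lemma abs_infsum_gen_outside_le:
  assumes t: "t \<ge> 0" and n: "n \<ge> 1" and g: "\<And>y. \<bar>g y\<bar> \<le> Cf * (1 + (of_int y)\<^sup>2)"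
  shows "\<bar>\<Sum>\<^sub>\<infinity>z. gen (outside n g) z * p t z\<bar> \<le> 30 * (\<alpha> + \<beta> + \<theta>) * Cf * (2 * K4 t / real n)"
proof (rule abs_infsum_tail_le[OF t n])
  show "30 * (\<alpha> + \<beta> + \<theta>) * Cf \<ge> 0"
    using quadratic_growth_const_nonneg[OF g] rate_sum_pos by simp
  show "\<bar>gen (outside n g) z\<bar> \<le> 30 * (\<alpha> + \<beta> + \<theta>) * Cf * w3 z" for z
    by (rule abs_gen_le[OF outside_quadratic[OF g]])
  show "gen (outside n g) z = 0" if "\<bar>of_int z\<bar> < real n" for z
    using that unfolding gen_def outside_def by auto
qed

lemma E_eq_window_add_outside:
  assumes t: "t \<ge> 0" and g: "\<And>y. \<bar>g y\<bar> \<le> Cf * (1 + (of_int y)\<^sup>2)"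
  shows "E g t = (\<Sum>y\<in>{-int n..int n}. g y * p t y) + E (outside n g) t"
proof -
  have "E g t = (\<Sum>\<^sub>\<infinity>y. (g y - outside n g y) * p t y + outside n g y * p t y)"
    unfolding E_def by (simp add: algebra_simps)
  also have "\<dots> = (\<Sum>\<^sub>\<infinity>y. (g y - outside n g y) * p t y) + E (outside n g) t"
    unfolding E_def
    by (intro infsum_add summable_quadratic[OF t outside_quadratic[OF g]] summable_on_int_finite_support[of n])
      (simp add: outside_def)
  also have "(\<Sum>\<^sub>\<infinity>y. (g y - outside n g y) * p t y) = (\<Sum>y\<in>{-int n..int n}. g y * p t y)"
    by (subst infsum_int_finite_support[of n]) (auto simp: outside_def intro!: sum.cong)
  finally show ?thesis .
qed

lemma infsum_gen_eq_window_add_outside: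
  assumes t: "t \<ge> 0" and g: "\<And>y. \<bar>g y\<bar> \<le> Cf * (1 + (of_int y)\<^sup>2)"
  shows "(\<Sum>\<^sub>\<infinity>z. gen g z * p t z)
    = (\<Sum>y\<in>{-int n..int n}. g y * dp t y) + (\<Sum>\<^sub>\<infinity>z. gen (outside n g) z * p t z)"
proof -
  have inside: "(\<lambda>y. g y - outside n g y) = (\<lambda>y. if \<bar>y\<bar> \<le> int n then g y else 0)"
    unfolding outside_def by auto
  have "(\<Sum>\<^sub>\<infinity>z. gen g z * p t z) = (\<Sum>\<^sub>\<infinity>y. g y * dp t y)"
    by (rule infsum_mult_dp_quadratic(2)[OF t g, symmetric])
  also have "\<dots> = (\<Sum>\<^sub>\<infinity>y. (g y - outside n g y) * dp t y + outside n g y * dp t y)"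
    by (simp add: algebra_simps)
  also have "\<dots> = (\<Sum>\<^sub>\<infinity>y. (g y - outside n g y) * dp t y) + (\<Sum>\<^sub>\<infinity>y. outside n g y * dp t y)"
    by (intro infsum_add infsum_mult_dp_quadratic(1)[OF t outside_quadratic[OF g]]
        summable_on_int_finite_support[of n]) (simp add: outside_def)
  also have "(\<Sum>\<^sub>\<infinity>y. (g y - outside n g y) * dp t y) = (\<Sum>y\<in>{-int n..int n}. g y * dp t y)"
    by (subst infsum_int_finite_support[of n]) (auto simp: outside_def intro!: sum.cong)
  also have "(\<Sum>\<^sub>\<infinity>y. outside n g y * dp t y) = (\<Sum>\<^sub>\<infinity>z. gen (outside n g) z * p t z)"
    by (rule infsum_mult_dp_quadratic(2)[OF t outside_quadratic[OF g]])
  finally show ?thesis .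
qed

lemma window_sum_tendsto_E:
  assumes s: "s \<ge> 0" and g: "\<And>y. \<bar>g y\<bar> \<le> Cf * (1 + (of_int y)\<^sup>2)"
  shows "(\<lambda>n. \<Sum>y\<in>{-int n..int n}. g y * p s y) \<longlonglongrightarrow> E g s"
proof -
  have "(\<lambda>n. E g s - (\<Sum>y\<in>{-int n..int n}. g y * p s y)) \<longlonglongrightarrow> 0"
  proof (rule Lim_null_comparison)
    have "norm (E g s - (\<Sum>y\<in>{-int n..int n}. g y * p s y)) \<le> 4 * Cf * K4 s / real n" if "n \<ge> 1" for n
      using E_eq_window_add_outside[OF s g, of n] abs_E_outside_le[OF s that g] by simp
    then show "eventually (\<lambda>n. norm (E g s - (\<Sum>y\<in>{-int n..int n}. g y * p s y)) \<le> 4 * Cf * K4 s / real n)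
        sequentially"
      unfolding eventually_sequentially by blast
    show "(\<lambda>n. 4 * Cf * K4 s / real n) \<longlonglongrightarrow> 0"
      by (rule lim_const_over_n)
  qed
  then have "(\<lambda>n. E g s - (E g s - (\<Sum>y\<in>{-int n..int n}. g y * p s y))) \<longlonglongrightarrow> E g s - 0"
    by (intro tendsto_intros)
  then show ?thesis
    by simp
qed

lemma window_sum_dp_approx:
  assumes s: "s \<ge> 0" and n: "n \<ge> 1" and g: "\<And>y. \<bar>g y\<bar> \<le> Cf * (1 + (of_int y)\<^sup>2)"
  shows "\<bar>(\<Sum>y\<in>{-int n..int n}. g y * dp s y) - (\<Sum>\<^sub>\<infinity>z. gen g z * p s z)\<bar>
           \<le> 60 * (\<alpha> + \<beta> + \<theta>) * Cf * K4 s / real n"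
proof -
  have "\<bar>(\<Sum>y\<in>{-int n..int n}. g y * dp s y) - (\<Sum>\<^sub>\<infinity>z. gen g z * p s z)\<bar>
      = \<bar>\<Sum>\<^sub>\<infinity>z. gen (outside n g) z * p s z\<bar>"
    using infsum_gen_eq_window_add_outside[OF s g, of n] by simp
  also have "\<dots> \<le> 30 * (\<alpha> + \<beta> + \<theta>) * Cf * (2 * K4 s / real n)"
    by (rule abs_infsum_gen_outside_le[OF s n g])
  also have "\<dots> = 60 * (\<alpha> + \<beta> + \<theta>) * Cf * K4 s / real n"
    by simp
  finally show ?thesis .
qed

text \<open>The truncated sums over \<open>[-n, n]\<close> are differentiable termwise; by the fourth moment
  bound their derivatives converge uniformly for times in a compact set.\<close>

lemma E_has_derivative:
  assumes g: "\<And>y. \<bar>g y\<bar> \<le> Cf * (1 + (of_int y)\<^sup>2)" and t: "t > 0"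
  shows "(E g has_real_derivative (\<Sum>\<^sub>\<infinity>z. gen g z * p t z)) (at t)"
proof (rule has_real_derivative_uniform_limit[where S = "{t / 2 <..< t + 1}"])
  show "convex {t / 2 <..< t + 1}" "open {t / 2 <..< t + 1}" "t \<in> {t / 2 <..< t + 1}"
    using t by auto
  show "((\<lambda>s. \<Sum>y\<in>{-int n..int n}. g y * p s y) has_real_derivative
      (\<Sum>y\<in>{-int n..int n}. g y * dp s y)) (at s)" if "s \<in> {t / 2 <..< t + 1}" for n s
    using that t by (intro DERIV_sum DERIV_cmult p_deriv) auto
  show "(\<lambda>n. \<Sum>y\<in>{-int n..int n}. g y * p s y) \<longlonglongrightarrow> E g s" if "s \<in> {t / 2 <..< t + 1}" for s
    using that t by (intro window_sum_tendsto_E[OF _ g]) auto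
next
  fix e :: real assume e: "e > 0"
  define M where "M = 60 * (\<alpha> + \<beta> + \<theta>) * Cf * K4 (t + 1)"
  define N where "N = nat \<lceil>M / e\<rceil> + 1"
  have "M \<le> e * real (nat \<lceil>M / e\<rceil>)"
    using real_nat_ceiling_ge[of "M / e"] e by (simp add: pos_divide_le_eq mult.commute)
  then have N: "M \<le> e * real N" "N \<ge> 1"
    unfolding N_def using e by (simp_all add: algebra_simps)
  have "\<bar>(\<Sum>y\<in>{-int n..int n}. g y * dp s y) - (\<Sum>\<^sub>\<infinity>z. gen g z * p s z)\<bar> \<le> e"
    if n: "n \<ge> N" and s: "s \<in> {t / 2 <..< t + 1}" for n s
  proof -
    have "60 * (\<alpha> + \<beta> + \<theta>) * Cf * K4 s / real n \<le> M / real n"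
      unfolding M_def using s K4_mono[of s "t + 1"] quadratic_growth_const_nonneg[OF g] rate_sum_pos
      by (intro divide_right_mono mult_left_mono) auto
    also have "\<dots> \<le> e"
      using N n e by (simp add: divide_le_eq) (smt (verit) mult_left_mono of_nat_mono)
    finally show ?thesis
      using window_sum_dp_approx[OF _ _ g, of s n] s t n N(2) by simp
  qed
  then show "\<exists>N. \<forall>n\<ge>N. \<forall>s\<in>{t / 2 <..< t + 1}.
      \<bar>(\<Sum>y\<in>{-int n..int n}. g y * dp s y) - (\<Sum>\<^sub>\<infinity>z. gen g z * p s z)\<bar> \<le> e"
    by blast
qed

subsection \<open>The first two moments\<close>

definition mean :: "real \<Rightarrow> real" where "mean = E (\<lambda>y. of_int y)"
definition sq_mean :: "real \<Rightarrow> real" where "sq_mean = E (\<lambda>y. (of_int y)\<^sup>2)"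
definition abs_mean :: "real \<Rightarrow> real" where "abs_mean = E (\<lambda>y. \<bar>of_int y\<bar>)"

lemma abs_le_one_plus_sq: "\<bar>(of_int y::real)\<bar> \<le> 1 * (1 + (of_int y)\<^sup>2)"
  using power_le_one_plus_power[of "\<bar>of_int y\<bar> :: real" 1 2] by simp

lemma abs_moment_comb_le:
  fixes c1 c2 c3 c4 :: real
  shows "\<bar>c1 + c2 * \<bar>of_int y\<bar> + c3 * of_int y + c4 * (of_int y)\<^sup>2\<bar>
     \<le> (\<bar>c1\<bar> + \<bar>c2\<bar> + \<bar>c3\<bar> + \<bar>c4\<bar>) * (1 + (of_int y)\<^sup>2)"
proof -
  define Y where "Y = (of_int y :: real)"
  have Y: "1 \<le> 1 + Y\<^sup>2" "\<bar>Y\<bar> \<le> 1 + Y\<^sup>2" "Y\<^sup>2 \<le> 1 + Y\<^sup>2"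
    unfolding Y_def using abs_le_one_plus_sq[of y] by simp_all
  have "\<bar>c1 + c2 * \<bar>Y\<bar> + c3 * Y + c4 * Y\<^sup>2\<bar> \<le> \<bar>c1\<bar> + \<bar>c2 * \<bar>Y\<bar>\<bar> + \<bar>c3 * Y\<bar> + \<bar>c4 * Y\<^sup>2\<bar>"
    using abs_triangle_ineq[of "c1 + c2 * \<bar>Y\<bar> + c3 * Y" "c4 * Y\<^sup>2"]
      abs_triangle_ineq[of "c1 + c2 * \<bar>Y\<bar>" "c3 * Y"] abs_triangle_ineq[of c1 "c2 * \<bar>Y\<bar>"]
    by linarith
  also have "\<dots> = \<bar>c1\<bar> * 1 + \<bar>c2\<bar> * \<bar>Y\<bar> + \<bar>c3\<bar> * \<bar>Y\<bar> + \<bar>c4\<bar> * Y\<^sup>2"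
    by (simp add: abs_mult)
  also have "\<dots> \<le> \<bar>c1\<bar> * (1 + Y\<^sup>2) + \<bar>c2\<bar> * (1 + Y\<^sup>2) + \<bar>c3\<bar> * (1 + Y\<^sup>2) + \<bar>c4\<bar> * (1 + Y\<^sup>2)"
    using Y by (intro add_mono mult_left_mono) auto
  finally show ?thesis
    unfolding Y_def by (simp add: algebra_simps)
qed

lemma E_moment_comb:
  assumes t: "t \<ge> 0"
  shows "E (\<lambda>y. c1 + c2 * \<bar>of_int y\<bar> + c3 * of_int y + c4 * (of_int y)\<^sup>2) t
       = c1 + c2 * abs_mean t + c3 * mean t + c4 * sq_mean t"
proof -
  have s: "(\<lambda>y. \<bar>of_int y\<bar> * p t y) summable_on UNIV" "(\<lambda>y. of_int y * p t y) summable_on UNIV"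
    "(\<lambda>y. (of_int y)\<^sup>2 * p t y) summable_on UNIV"
    using abs_le_one_plus_sq by (auto intro!: summable_quadratic[OF t, where Cf = 1])
  have "E (\<lambda>y. c1 + c2 * \<bar>of_int y\<bar> + c3 * of_int y + c4 * (of_int y)\<^sup>2) t
     = (\<Sum>\<^sub>\<infinity>y. ((c1 * p t y + c2 * (\<bar>of_int y\<bar> * p t y)) + c3 * (of_int y * p t y))
          + c4 * ((of_int y)\<^sup>2 * p t y))"
    unfolding E_def by (rule infsum_cong) (simp add: algebra_simps)
  also have "\<dots> = c1 * (\<Sum>\<^sub>\<infinity>y. p t y) + c2 * (\<Sum>\<^sub>\<infinity>y. \<bar>of_int y\<bar> * p t y)
      + c3 * (\<Sum>\<^sub>\<infinity>y. of_int y * p t y) + c4 * (\<Sum>\<^sub>\<infinity>y. (of_int y)\<^sup>2 * p t y)"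
    using s p_summable[OF t]
    by (simp add: infsum_add summable_on_add summable_on_cmult_right infsum_cmult_right')
  finally show ?thesis
    unfolding abs_mean_def mean_def sq_mean_def E_def p_infsum[OF t] by simp
qed

lemma moment_comb_mono:
  assumes t: "t \<ge> 0"
    and le: "\<And>y. c1 + c2 * \<bar>of_int y\<bar> + c3 * of_int y + c4 * (of_int y)\<^sup>2
                 \<le> d1 + d2 * \<bar>of_int y\<bar> + d3 * of_int y + d4 * (of_int y)\<^sup>2"
  shows "c1 + c2 * abs_mean t + c3 * mean t + c4 * sq_mean t \<le> d1 + d2 * abs_mean t + d3 * mean t + d4 * sq_mean t"
proof -
  have "E (\<lambda>y. c1 + c2 * \<bar>of_int y\<bar> + c3 * of_int y + c4 * (of_int y)\<^sup>2) t
     \<le> E (\<lambda>y. d1 + d2 * \<bar>of_int y\<bar> + d3 * of_int y + d4 * (of_int y)\<^sup>2) t"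
    unfolding E_def using le p_nonneg[OF t]
    by (intro infsum_mono summable_quadratic[OF t abs_moment_comb_le]) (auto intro: mult_right_mono)
  then show ?thesis
    unfolding E_moment_comb[OF t] .
qed

lemma gen_id: "gen (\<lambda>y. of_int y) z = \<alpha> - \<beta> - \<theta> * of_int z"
  unfolding gen_def using b_minus_d[of z] by (simp add: algebra_simps)

lemma gen_square:
  "gen (\<lambda>y. (of_int y)\<^sup>2) z = \<alpha> + \<beta> + \<theta> * \<bar>of_int z\<bar> + 2 * (\<alpha> - \<beta>) * of_int z - 2 * \<theta> * (of_int z)\<^sup>2"
proof -
  have "gen (\<lambda>y. (of_int y)\<^sup>2) z = (b z + d z) + 2 * of_int z * (b z - d z)"
    unfolding gen_def by (simp add: algebra_simps power2_eq_square)
  then show ?thesis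
    unfolding b_plus_d b_minus_d by (simp add: algebra_simps power2_eq_square)
qed

lemma mean_deriv:
  assumes "u > 0"
  shows "(mean has_real_derivative (\<alpha> - \<beta> - \<theta> * mean u)) (at u)"
proof -
  have "(mean has_real_derivative (\<Sum>\<^sub>\<infinity>z. gen (\<lambda>y. of_int y) z * p u z)) (at u)"
    unfolding mean_def using abs_le_one_plus_sq by (intro E_has_derivative[OF _ assms, where Cf = 1]) auto
  moreover have "(\<Sum>\<^sub>\<infinity>z. gen (\<lambda>y. of_int y) z * p u z)
      = E (\<lambda>y. (\<alpha> - \<beta>) + 0 * \<bar>of_int y\<bar> + (- \<theta>) * of_int y + 0 * (of_int y)\<^sup>2) u"
    unfolding E_def gen_id by simp
  moreover have "\<dots> = (\<alpha> - \<beta>) + 0 * abs_mean u + (- \<theta>) * mean u + 0 * sq_mean u"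
    using assms by (intro E_moment_comb) simp
  ultimately show ?thesis
    by simp
qed

lemma sq_mean_deriv:
  assumes "u > 0"
  shows "(sq_mean has_real_derivative
           (\<alpha> + \<beta> + \<theta> * abs_mean u + 2 * (\<alpha> - \<beta>) * mean u - 2 * \<theta> * sq_mean u)) (at u)"
proof -
  have "(sq_mean has_real_derivative (\<Sum>\<^sub>\<infinity>z. gen (\<lambda>y. (of_int y)\<^sup>2) z * p u z)) (at u)"
    unfolding sq_mean_def by (intro E_has_derivative[OF _ assms, where Cf = 1]) auto
  moreover have "(\<Sum>\<^sub>\<infinity>z. gen (\<lambda>y. (of_int y)\<^sup>2) z * p u z)
      = E (\<lambda>y. (\<alpha> + \<beta>) + \<theta> * \<bar>of_int y\<bar> + (2 * (\<alpha> - \<beta>)) * of_int y + (- 2 * \<theta>) * (of_int y)\<^sup>2) u"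
    unfolding E_def gen_square by (simp add: algebra_simps)
  moreover have "\<dots> = (\<alpha> + \<beta>) + \<theta> * abs_mean u + (2 * (\<alpha> - \<beta>)) * mean u + (- 2 * \<theta>) * sq_mean u"
    using assms by (intro E_moment_comb) simp
  ultimately show ?thesis
    by simp
qed

lemma mean_tendsto: "(mean \<longlongrightarrow> (\<alpha> - \<beta>) / \<theta>) at_top"
  by (rule linear_ode_tendsto[where c = "\<lambda>_. \<alpha> - \<beta>", OF theta_pos mean_deriv]) auto

lemma abs_mean_ge_mean:
  assumes "t \<ge> 0"
  shows "\<bar>mean t\<bar> \<le> abs_mean t"
proof -
  have "mean t \<le> abs_mean t" "- mean t \<le> abs_mean t"
    using moment_comb_mono[OF assms, of 0 0 1 0 0 1 0 0] moment_comb_mono[OF assms, of 0 0 "-1" 0 0 1 0 0]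
    by simp_all
  then show ?thesis
    by simp
qed

lemma abs_mean_le_sq_mean: "t \<ge> 0 \<Longrightarrow> abs_mean t \<le> 1 + sq_mean t"
  using moment_comb_mono[of t 0 1 0 0 1 0 0 1] abs_le_one_plus_sq by simp

text \<open>By AM-GM, \<open>(\<theta> + 2 \<bar>\<alpha> - \<beta>\<bar>) \<bar>y\<bar> \<le> \<theta> y\<^sup>2 + (\<theta> + 2 \<bar>\<alpha> - \<beta>\<bar>)\<^sup>2 / (4 \<theta>)\<close>, so the drift of
  \<open>sq_mean\<close> is at most \<open>sq_mean_drift_bound - \<theta> sq_mean\<close>.\<close>

definition sq_mean_drift_bound :: real where
  "sq_mean_drift_bound = \<alpha> + \<beta> + (\<theta> + 2 * \<bar>\<alpha> - \<beta>\<bar>)\<^sup>2 / (4 * \<theta>)"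

lemma linear_le_quadratic:
  fixes u :: real
  shows "c * u \<le> \<theta> * u\<^sup>2 + c\<^sup>2 / (4 * \<theta>)"
proof -
  have "0 \<le> (2 * \<theta> * u - c)\<^sup>2 / (4 * \<theta>)"
    using theta_pos by simp
  also have "\<dots> = \<theta> * u\<^sup>2 + c\<^sup>2 / (4 * \<theta>) - c * u"
    using theta_pos by (simp add: field_simps power2_eq_square)
  finally show ?thesis
    by simp
qed

lemma sq_mean_bounded: "t \<ge> 1 \<Longrightarrow> sq_mean t \<le> max (sq_mean 1) (sq_mean_drift_bound / \<theta>)"
proof (rule linear_ode_bounded[OF theta_pos sq_mean_deriv])
  fix u :: real assume u: "u > 0"
  define c where "c = \<theta> + 2 * \<bar>\<alpha> - \<beta>\<bar>"
  have "0 + \<theta> * abs_mean u + (2 * (\<alpha> - \<beta>)) * mean u + (- \<theta>) * sq_mean u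
      \<le> c\<^sup>2 / (4 * \<theta>) + 0 * abs_mean u + 0 * mean u + 0 * sq_mean u"
  proof (rule moment_comb_mono)
    show "u \<ge> 0"
      using u by simp
    fix y
    have "2 * (\<alpha> - \<beta>) * of_int y \<le> \<bar>2 * (\<alpha> - \<beta>) * of_int y\<bar>"
      by (rule abs_ge_self)
    also have "\<dots> = 2 * \<bar>\<alpha> - \<beta>\<bar> * \<bar>of_int y\<bar>"
      unfolding abs_mult by simp
    finally have "2 * (\<alpha> - \<beta>) * of_int y \<le> 2 * \<bar>\<alpha> - \<beta>\<bar> * \<bar>of_int y :: real\<bar>" .
    moreover have "c * \<bar>of_int y\<bar> \<le> \<theta> * \<bar>of_int y :: real\<bar>\<^sup>2 + c\<^sup>2 / (4 * \<theta>)"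
      by (rule linear_le_quadratic)
    ultimately show "0 + \<theta> * \<bar>of_int y\<bar> + (2 * (\<alpha> - \<beta>)) * of_int y + (- \<theta>) * (of_int y)\<^sup>2
        \<le> c\<^sup>2 / (4 * \<theta>) + 0 * \<bar>of_int y\<bar> + 0 * of_int y + 0 * (of_int y)\<^sup>2"
      unfolding c_def by (simp add: algebra_simps)
  qed
  then show "\<alpha> + \<beta> + \<theta> * abs_mean u + 2 * (\<alpha> - \<beta>) * mean u - 2 * \<theta> * sq_mean u
      \<le> sq_mean_drift_bound - \<theta> * sq_mean u"
    unfolding sq_mean_drift_bound_def c_def by linarith
qed

subsection \<open>An \<open>L\<^sup>1\<close> contraction for the tail function\<close>

definition tail :: "real \<Rightarrow> int \<Rightarrow> real" where "tail t y = E (\<lambda>z. if y \<le> z then 1 else 0) t"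
definition flux :: "real \<Rightarrow> int \<Rightarrow> real" where "flux t y = b (y - 1) * p t (y - 1) - d y * p t y"

lemma tail_deriv:
  assumes t: "t > 0"
  shows "((\<lambda>s. tail s y) has_real_derivative flux t y) (at t)"
proof -
  define f where "f z = (if y \<le> z then 1 else 0 :: real)" for z
  define n where "n = nat (\<bar>y\<bar> + 1)"
  have d: "(E f has_real_derivative (\<Sum>\<^sub>\<infinity>z. gen f z * p t z)) (at t)"
    by (rule E_has_derivative[OF _ t, where Cf = 1]) (simp add: f_def)
  have gen_f: "gen f z * p t z
      = (if z = y - 1 then b (y - 1) * p t (y - 1) else 0) - (if z = y then d y * p t y else 0)" for z
    unfolding gen_def f_def by auto
  have "(\<Sum>\<^sub>\<infinity>z. gen f z * p t z) = (\<Sum>z\<in>{- int n..int n}. gen f z * p t z)"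
  proof (rule infsum_int_finite_support)
    fix z assume "\<bar>z\<bar> > int n"
    then have "z \<noteq> y - 1" "z \<noteq> y"
      unfolding n_def by auto
    then show "gen f z * p t z = 0"
      unfolding gen_f by simp
  qed
  also have "\<dots> = flux t y"
  proof -
    have "y - 1 \<in> {- int n..int n}" "y \<in> {- int n..int n}"
      unfolding n_def by auto
    then show ?thesis
      unfolding gen_f sum_subtractf flux_def by simp
  qed
  finally show ?thesis
    using d unfolding tail_def f_def by simp
qed

lemma summable_indicator_p: "t \<ge> 0 \<Longrightarrow> (\<lambda>z. (if P z then 1 else 0) * p t z) summable_on UNIV"
  by (rule summable_bounded_mult_p[where B = 1]) auto

lemma E_indicator_point: "t \<ge> 0 \<Longrightarrow> E (\<lambda>z. if z = y then 1 else 0) t = p t y"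
proof -
  have "E (\<lambda>z. if z = y then 1 else 0) t = (\<Sum>\<^sub>\<infinity>z\<in>{y}. (if z = y then 1 else 0) * p t z)"
    unfolding E_def by (rule infsum_cong_neutral) auto
  then show ?thesis
    by simp
qed

lemma tail_diff:
  assumes t: "t \<ge> 0"
  shows "tail t y - tail t (y + 1) = p t y"
proof -
  have "tail t y - tail t (y + 1)
      = (\<Sum>\<^sub>\<infinity>z. (if y \<le> z then 1 else 0) * p t z - (if y + 1 \<le> z then 1 else 0) * p t z)"
    unfolding tail_def E_def by (rule infsum_diff_real[symmetric]) (rule summable_indicator_p[OF t])+
  also have "\<dots> = E (\<lambda>z. if z = y then 1 else 0) t"
    unfolding E_def by (rule infsum_cong) auto
  finally show ?thesis
    using E_indicator_point[OF t] by simp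
qed

lemma one_minus_tail:
  assumes t: "t \<ge> 0"
  shows "1 - tail t y = E (\<lambda>z. if z < y then 1 else 0) t"
proof -
  have "1 - tail t y = (\<Sum>\<^sub>\<infinity>z. p t z) - tail t y"
    using p_infsum[OF t] by simp
  also have "\<dots> = (\<Sum>\<^sub>\<infinity>z. p t z - (if y \<le> z then 1 else 0) * p t z)"
    unfolding tail_def E_def
    by (rule infsum_diff_real[symmetric]) (use p_summable[OF t] summable_indicator_p[OF t] in auto)
  also have "\<dots> = E (\<lambda>z. if z < y then 1 else 0) t"
    unfolding E_def by (rule infsum_cong) auto
  finally show ?thesis .
qed

lemma tail_bounds:
  assumes t: "t \<ge> 0"
  shows "0 \<le> tail t y \<and> tail t y \<le> 1"
proof -
  have "tail t y \<le> (\<Sum>\<^sub>\<infinity>z. p t z)"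
    unfolding tail_def E_def using p_nonneg[OF t]
    by (intro infsum_mono[OF summable_indicator_p[OF t] p_summable[OF t]]) auto
  moreover have "0 \<le> tail t y"
    unfolding tail_def E_def using p_nonneg[OF t] by (intro infsum_nonneg) auto
  ultimately show ?thesis
    using p_infsum[OF t] by simp
qed

lemma tail_indicator_le:
  assumes t: "t \<ge> 0" and n: "n \<ge> 1" and P: "\<And>z. P z \<Longrightarrow> real n + 1 \<le> \<bar>of_int z\<bar>"
  shows "(1 + real n) * E (\<lambda>z. if P z then 1 else 0) t \<le> 2 * K4 t / real n"
proof -
  have "\<bar>\<Sum>\<^sub>\<infinity>z. ((1 + real n) * (if P z then 1 else 0)) * p t z\<bar> \<le> 1 * (2 * K4 t / real n)"
  proof (rule abs_infsum_tail_le[OF t n])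
    show "\<bar>(1 + real n) * (if P z then 1 else 0)\<bar> \<le> 1 * w3 z" if "real n \<le> \<bar>of_int z\<bar>" for z
      using P[of z] power_le_one_plus_power[of "\<bar>of_int z\<bar> :: real" 1 3] unfolding w3_def by auto
    show "(1 + real n) * (if P z then 1 else 0) = 0" if "\<bar>of_int z\<bar> < real n" for z
      using that P[of z] by auto
  qed simp
  then show ?thesis
    unfolding E_def by (simp add: infsum_cmult_right' mult.assoc)
qed

lemma tail_upper_le: "t \<ge> 0 \<Longrightarrow> n \<ge> 1 \<Longrightarrow> (1 + real n) * tail t (int n + 1) \<le> 2 * K4 t / real n"
  unfolding tail_def by (rule tail_indicator_le) auto

lemma tail_lower_le:
  "t \<ge> 0 \<Longrightarrow> n \<ge> 1 \<Longrightarrow> (1 + real n) * (1 - tail t (- int n - 1)) \<le> 2 * K4 t / real n"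
  unfolding one_minus_tail by (rule tail_indicator_le) auto

definition dtail :: "real \<Rightarrow> real \<Rightarrow> int \<Rightarrow> real" where "dtail h t y = tail (t + h) y - tail t y"

lemma dtail_deriv:
  assumes "h \<ge> 0" "t > 0"
  shows "((\<lambda>s. dtail h s y) has_real_derivative (flux (t + h) y - flux t y)) (at t)"
proof -
  have "((\<lambda>s. tail s y) has_real_derivative flux (t + h) y) (at (t + h))"
    using tail_deriv assms by simp
  then have "((\<lambda>s. tail (s + h) y) has_real_derivative flux (t + h) y) (at t)"
    by (simp add: DERIV_shift)
  then show ?thesis
    unfolding dtail_def using assms by (intro DERIV_diff tail_deriv) auto
qed

lemma flux_increment:
  assumes h: "h \<ge> 0" and t: "t \<ge> 0"
  shows "flux (t + h) y - flux t y
    = b (y - 1) * (dtail h t (y - 1) - dtail h t y) - d y * (dtail h t y - dtail h t (y + 1))"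
proof -
  have p: "p (t + h) z - p t z = dtail h t z - dtail h t (z + 1)" for z
    unfolding dtail_def using tail_diff[of "t + h" z] tail_diff[OF t, of z] h t by simp
  have "flux (t + h) y - flux t y = b (y - 1) * (p (t + h) (y - 1) - p t (y - 1)) - d y * (p (t + h) y - p t y)"
    unfolding flux_def by (simp add: algebra_simps)
  then show ?thesis
    unfolding p by simp
qed

lemma abs_dtail_boundary_le:
  assumes h: "h \<ge> 0" and s: "0 \<le> s" "s \<le> T" and n: "n \<ge> 1"
  shows "(1 + real n) * \<bar>dtail h s (int n + 1)\<bar> \<le> 4 * K4 (T + h) / real n"
    and "(1 + real n) * \<bar>dtail h s (- int n - 1)\<bar> \<le> 4 * K4 (T + h) / real n"
proof -
  have sh: "s + h \<ge> 0"
    using s h by simp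
  have K: "2 * K4 s / real n \<le> 2 * K4 (T + h) / real n" "2 * K4 (s + h) / real n \<le> 2 * K4 (T + h) / real n"
    using s h K4_mono[of s "T + h"] K4_mono[of "s + h" "T + h"] by (simp_all add: divide_right_mono)
  have "\<bar>dtail h s (int n + 1)\<bar> \<le> tail (s + h) (int n + 1) + tail s (int n + 1)"
    unfolding dtail_def using tail_bounds[OF sh] tail_bounds[OF s(1)] by (intro abs_diff_le_add) auto
  then have "(1 + real n) * \<bar>dtail h s (int n + 1)\<bar>
      \<le> (1 + real n) * tail (s + h) (int n + 1) + (1 + real n) * tail s (int n + 1)"
    by (simp add: mult_left_mono flip: distrib_left)
  then show "(1 + real n) * \<bar>dtail h s (int n + 1)\<bar> \<le> 4 * K4 (T + h) / real n"
    using tail_upper_le[OF sh n] tail_upper_le[OF s(1) n] K by linarith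
  have "dtail h s (- int n - 1) = (1 - tail s (- int n - 1)) - (1 - tail (s + h) (- int n - 1))"
    unfolding dtail_def by simp
  then have "\<bar>dtail h s (- int n - 1)\<bar> \<le> (1 - tail (s + h) (- int n - 1)) + (1 - tail s (- int n - 1))"
    using tail_bounds[OF sh, of "- int n - 1"] tail_bounds[OF s(1), of "- int n - 1"]
      abs_diff_le_add[of "1 - tail s (- int n - 1)" "1 - tail (s + h) (- int n - 1)"] by simp
  then have "(1 + real n) * \<bar>dtail h s (- int n - 1)\<bar>
      \<le> (1 + real n) * (1 - tail (s + h) (- int n - 1)) + (1 + real n) * (1 - tail s (- int n - 1))"
    by (simp add: mult_left_mono flip: distrib_left)
  then show "(1 + real n) * \<bar>dtail h s (- int n - 1)\<bar> \<le> 4 * K4 (T + h) / real n"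
    using tail_lower_le[OF sh n] tail_lower_le[OF s(1) n] K by linarith
qed

lemma boundary_flux_le:
  assumes h: "h \<ge> 0" and s: "0 \<le> s" "s \<le> T" and n: "n \<ge> 1"
  shows "b (- int n - 1) * \<bar>dtail h s (- int n - 1)\<bar> + d (int n) * \<bar>dtail h s (int n + 1)\<bar>
     \<le> 12 * (\<alpha> + \<beta> + \<theta>) * K4 (T + h) / real n"
proof -
  define A where "A = \<alpha> + \<beta> + \<theta>"
  define K where "K = 4 * K4 (T + h) / real n"
  have A: "A > 0"
    unfolding A_def by (rule rate_sum_pos)
  have "b (- int n - 1) \<le> A * (2 + real n)"
    using b_le_affine[of "- int n - 1"] unfolding A_def by (simp add: algebra_simps)
  also have "\<dots> \<le> 2 * A * (1 + real n)"
    using A by (simp add: algebra_simps)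
  finally have "b (- int n - 1) * \<bar>dtail h s (- int n - 1)\<bar> \<le> 2 * A * (1 + real n) * \<bar>dtail h s (- int n - 1)\<bar>"
    by (rule mult_right_mono) simp
  also have "\<dots> = 2 * A * ((1 + real n) * \<bar>dtail h s (- int n - 1)\<bar>)"
    by (simp add: mult.assoc)
  also have "\<dots> \<le> 2 * A * K"
    unfolding K_def using abs_dtail_boundary_le(2)[OF assms] A by (intro mult_left_mono) auto
  finally have lower: "b (- int n - 1) * \<bar>dtail h s (- int n - 1)\<bar> \<le> 2 * A * K" .
  have "d (int n) * \<bar>dtail h s (int n + 1)\<bar> \<le> A * ((1 + real n) * \<bar>dtail h s (int n + 1)\<bar>)"
    using mult_right_mono[OF d_le_affine[of "int n"], of "\<bar>dtail h s (int n + 1)\<bar>"] unfolding A_def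
    by (simp add: mult.assoc)
  also have "\<dots> \<le> A * K"
    unfolding K_def using abs_dtail_boundary_le(1)[OF assms] A by (intro mult_left_mono) auto
  finally have "d (int n) * \<bar>dtail h s (int n + 1)\<bar> \<le> A * K" .
  moreover have "2 * A * K + A * K = 12 * (\<alpha> + \<beta> + \<theta>) * K4 (T + h) / real n"
    unfolding K_def A_def using n by (simp add: field_simps)
  ultimately show ?thesis
    using lower by linarith
qed

definition smoothed_L1 :: "real \<Rightarrow> nat \<Rightarrow> real \<Rightarrow> real \<Rightarrow> real" where
  "smoothed_L1 h n \<delta> s = (\<Sum>y\<in>{- int n..int n}. sqrt ((dtail h s y)\<^sup>2 + \<delta>\<^sup>2) - \<delta>)"
definition smoothed_L1_deriv :: "real \<Rightarrow> nat \<Rightarrow> real \<Rightarrow> real \<Rightarrow> real" where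
  "smoothed_L1_deriv h n \<delta> s =
     (\<Sum>y\<in>{- int n..int n}. (dtail h s y / sqrt ((dtail h s y)\<^sup>2 + \<delta>\<^sup>2)) * (flux (s + h) y - flux s y))"
definition rate_total :: "nat \<Rightarrow> real" where "rate_total n = (\<Sum>y\<in>{- int n..int n}. b (y - 1) + d y)"

lemma rate_total_nonneg: "rate_total n \<ge> 0"
  unfolding rate_total_def using b_pos d_pos by (intro sum_nonneg) (simp add: add_nonneg_nonneg less_imp_le)

lemma has_real_derivative_smoothed_L1:
  assumes "h \<ge> 0" "s > 0" "\<delta> > 0"
  shows "(smoothed_L1 h n \<delta> has_real_derivative smoothed_L1_deriv h n \<delta> s) (at s)"
proof -
  have "((\<lambda>s. \<Sum>y\<in>{- int n..int n}. sqrt ((dtail h s y)\<^sup>2 + \<delta>\<^sup>2) - \<delta>) has_real_derivative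
      smoothed_L1_deriv h n \<delta> s) (at s)"
    unfolding smoothed_L1_deriv_def using assms
    by (intro DERIV_sum has_real_derivative_smoothed_abs dtail_deriv) auto
  then show ?thesis
    unfolding smoothed_L1_def by simp
qed

lemma smoothed_L1_le: "\<delta> \<ge> 0 \<Longrightarrow> smoothed_L1 h n \<delta> s \<le> (\<Sum>y\<in>{- int n..int n}. \<bar>dtail h s y\<bar>)"
  unfolding smoothed_L1_def using sqrt_sq_add_le by (intro sum_mono) (simp add: algebra_simps)

text \<open>Summing the smoothed sign inequality over the window, the transport terms telescope to
  boundary fluxes, while \<open>rate_increments\<close> turns the remaining terms into \<open>-\<theta>\<close> times the
  \<open>L\<^sup>1\<close> norm.\<close>

lemma smoothed_L1_deriv_le:
  assumes h: "h \<ge> 0" and s: "s \<ge> 0" and \<delta>: "\<delta> > 0"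
  shows "smoothed_L1_deriv h n \<delta> s \<le> - \<theta> * smoothed_L1 h n \<delta> s
      + (b (- int n - 1) * \<bar>dtail h s (- int n - 1)\<bar> + d (int n) * \<bar>dtail h s (int n + 1)\<bar>) + \<delta> * rate_total n"
proof -
  define F where "F y = \<bar>dtail h s y\<bar>" for y
  define W where "W = {- int n..int n}"
  have "smoothed_L1_deriv h n \<delta> s
      \<le> (\<Sum>y\<in>W. b (y - 1) * F (y - 1) + d y * F (y + 1) - (b (y - 1) + d y) * (F y - \<delta>))"
    unfolding smoothed_L1_deriv_def W_def[symmetric] flux_increment[OF h s] F_def
    using b_pos d_pos by (intro sum_mono smoothed_sign_bound[OF \<delta>]) (auto simp: less_imp_le)
  also have "\<dots> = (\<Sum>y\<in>W. b (y - 1) * F (y - 1) - b y * F y)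
      + (\<Sum>y\<in>W. d ((y + 1) - 1) * F (y + 1) - d (y - 1) * F y)
      + (\<Sum>y\<in>W. (b y - b (y - 1) + d (y - 1) - d y) * F y) + \<delta> * (\<Sum>y\<in>W. b (y - 1) + d y)"
    by (simp add: sum.distrib[symmetric] sum_distrib_left algebra_simps)
  also have "(\<Sum>y\<in>W. b (y - 1) * F (y - 1) - b y * F y) = b (- int n - 1) * F (- int n - 1) - b (int n) * F (int n)"
    unfolding W_def using sum_int_interval_telescope_left[of "\<lambda>y. b y * F y" n] by simp
  also have "(\<Sum>y\<in>W. d ((y + 1) - 1) * F (y + 1) - d (y - 1) * F y)
      = d (int n) * F (int n + 1) - d (- int n - 1) * F (- int n)"
    unfolding W_def using sum_int_interval_telescope_right[of "\<lambda>y. d (y - 1) * F y" n] by simp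
  also have "(\<Sum>y\<in>W. (b y - b (y - 1) + d (y - 1) - d y) * F y) = - \<theta> * (\<Sum>y\<in>W. F y)"
    using rate_increments by (simp add: sum_distrib_left)
  also have "(\<Sum>y\<in>W. b (y - 1) + d y) = rate_total n"
    unfolding rate_total_def W_def ..
  finally have "smoothed_L1_deriv h n \<delta> s \<le> b (- int n - 1) * F (- int n - 1) - b (int n) * F (int n)
      + (d (int n) * F (int n + 1) - d (- int n - 1) * F (- int n)) + - \<theta> * (\<Sum>y\<in>W. F y) + \<delta> * rate_total n" .
  moreover have "b (int n) * F (int n) \<ge> 0" "d (- int n - 1) * F (- int n) \<ge> 0"
    unfolding F_def using b_pos[of "int n"] d_pos[of "- int n - 1"] by simp_all
  moreover have "- \<theta> * (\<Sum>y\<in>W. F y) \<le> - \<theta> * smoothed_L1 h n \<delta> s"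
    using smoothed_L1_le[of \<delta> h n s] \<delta> theta_pos unfolding W_def F_def by simp
  ultimately show ?thesis
    unfolding F_def by linarith
qed

lemma sum_abs_dtail_le_smoothed_L1:
  "(\<Sum>y\<in>{- int n..int n}. \<bar>dtail h s y\<bar>) \<le> smoothed_L1 h n \<delta> s + \<delta> * real (2 * n + 1)"
proof -
  have "(\<Sum>y\<in>{- int n..int n}. \<bar>dtail h s y\<bar>) \<le> (\<Sum>y\<in>{- int n..int n}. (sqrt ((dtail h s y)\<^sup>2 + \<delta>\<^sup>2) - \<delta>) + \<delta>)"
    using abs_le_sqrt_sq_add by (intro sum_mono) simp
  also have "\<dots> = smoothed_L1 h n \<delta> s + \<delta> * real (2 * n + 1)"
    unfolding smoothed_L1_def sum.distrib by simp
  finally show ?thesis .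
qed

lemma smoothed_L1_contraction:
  assumes h: "h \<ge> 0" and T: "T \<ge> 1" and n: "n \<ge> 1" and \<delta>: "\<delta> > 0"
  defines "c \<equiv> 12 * (\<alpha> + \<beta> + \<theta>) * K4 (T + h) / real n + \<delta> * rate_total n"
  shows "smoothed_L1 h n \<delta> T \<le> c / \<theta> + (smoothed_L1 h n \<delta> 1 - c / \<theta>) * exp (- \<theta> * (T - 1))"
proof (rule linear_ode_upper_bound[where \<phi>' = "smoothed_L1_deriv h n \<delta>", OF T])
  show "\<theta> \<noteq> 0"
    using theta_pos by simp
  show "continuous_on {1..T} (smoothed_L1 h n \<delta>)"
    using has_real_derivative_smoothed_L1[OF h _ \<delta>] by (rule continuous_on_if_derivative_pos) simp_all
  fix u assume u: "1 < u" "u < T"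
  show "(smoothed_L1 h n \<delta> has_real_derivative smoothed_L1_deriv h n \<delta> u) (at u)"
    using has_real_derivative_smoothed_L1[OF h _ \<delta>] u by simp
  show "smoothed_L1_deriv h n \<delta> u \<le> c - \<theta> * smoothed_L1 h n \<delta> u"
    using smoothed_L1_deriv_le[OF h _ \<delta>, of u n] boundary_flux_le[OF h _ _ n, of u T] u
    unfolding c_def by simp
qed

lemma L1_contraction:
  assumes h: "h \<ge> 0" and T: "T \<ge> 1" and n: "n \<ge> 1"
  shows "(\<Sum>y\<in>{- int n..int n}. \<bar>dtail h T y\<bar>)
     \<le> exp (- \<theta> * (T - 1)) * (\<Sum>y\<in>{- int n..int n}. \<bar>dtail h 1 y\<bar>)
       + 12 * (\<alpha> + \<beta> + \<theta>) * K4 (T + h) / real n / \<theta>"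
proof (rule le_of_le_add_pos_mult)
  define ErrN where "ErrN = 12 * (\<alpha> + \<beta> + \<theta>) * K4 (T + h) / real n"
  define ex where "ex = exp (- \<theta> * (T - 1))"
  define L1 where "L1 s = (\<Sum>y\<in>{- int n..int n}. \<bar>dtail h s y\<bar>)" for s
  fix \<delta> :: real assume \<delta>: "\<delta> > 0"
  define c where "c = ErrN + \<delta> * rate_total n"
  have "c \<ge> 0"
    unfolding c_def ErrN_def using rate_sum_pos K4_pos[of "T + h"] rate_total_nonneg \<delta> by simp
  then have "(smoothed_L1 h n \<delta> 1 - c / \<theta>) * ex \<le> smoothed_L1 h n \<delta> 1 * ex"
    using theta_pos unfolding ex_def by (simp add: algebra_simps)
  also have "\<dots> \<le> L1 1 * ex"
    unfolding L1_def ex_def using smoothed_L1_le \<delta> by (intro mult_right_mono) auto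
  finally have "smoothed_L1 h n \<delta> T \<le> c / \<theta> + L1 1 * ex"
    using smoothed_L1_contraction[OF h T n \<delta>] unfolding c_def ErrN_def ex_def by linarith
  moreover have "L1 T \<le> smoothed_L1 h n \<delta> T + \<delta> * real (2 * n + 1)"
    unfolding L1_def by (rule sum_abs_dtail_le_smoothed_L1)
  moreover have "c / \<theta> + \<delta> * real (2 * n + 1) = ErrN / \<theta> + \<delta> * (rate_total n / \<theta> + real (2 * n + 1))"
    unfolding c_def by (simp add: add_divide_distrib algebra_simps)
  ultimately show "L1 T \<le> ex * L1 1 + ErrN / \<theta> + \<delta> * (rate_total n / \<theta> + real (2 * n + 1))"
    by (simp add: mult.commute)
next
  show "rate_total n / \<theta> + real (2 * n + 1) \<ge> 0"
    using rate_total_nonneg theta_pos by simp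
qed

subsection \<open>Convergence of the absolute mean and of the moments\<close>

definition trunc_abs_mean :: "real \<Rightarrow> nat \<Rightarrow> real" where
  "trunc_abs_mean t n = (\<Sum>y\<in>{1..int n}. tail t y) + (\<Sum>y\<in>{- int n + 1..0}. (1 - tail t y))"

lemma trunc_abs_mean_eq_E:
  assumes t: "t \<ge> 0"
  shows "trunc_abs_mean t n = E (\<lambda>z. min \<bar>of_int z\<bar> (real n)) t"
proof -
  define A1 where "A1 = {1..int n}"
  define A2 where "A2 = {- int n + 1..0}"
  have fin: "finite A1" "finite A2"
    unfolding A1_def A2_def by simp_all
  have "E (\<lambda>z. min \<bar>of_int z\<bar> (real n)) t
      = (\<Sum>\<^sub>\<infinity>z. (\<Sum>y\<in>A1. (if y \<le> z then 1 else 0) * p t z) + (\<Sum>y\<in>A2. (if z < y then 1 else 0) * p t z))"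
    unfolding E_def min_abs_eq_sum_indicators A1_def A2_def
    by (rule infsum_cong) (simp only: distrib_right sum_distrib_right)
  also have "\<dots> = (\<Sum>\<^sub>\<infinity>z. \<Sum>y\<in>A1. (if y \<le> z then 1 else 0) * p t z)
      + (\<Sum>\<^sub>\<infinity>z. \<Sum>y\<in>A2. (if z < y then 1 else 0) * p t z)"
    using fin by (intro infsum_add summable_on_sum_real summable_indicator_p[OF t])
  also have "(\<Sum>\<^sub>\<infinity>z. \<Sum>y\<in>A1. (if y \<le> z then 1 else 0) * p t z) = (\<Sum>y\<in>A1. tail t y)"
    unfolding tail_def E_def using fin by (intro infsum_sum_real summable_indicator_p[OF t])
  also have "(\<Sum>\<^sub>\<infinity>z. \<Sum>y\<in>A2. (if z < y then 1 else 0) * p t z) = (\<Sum>y\<in>A2. 1 - tail t y)"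
    unfolding one_minus_tail[OF t] E_def using fin by (intro infsum_sum_real summable_indicator_p[OF t])
  finally show ?thesis
    unfolding trunc_abs_mean_def A1_def A2_def by simp
qed

lemma trunc_abs_mean_approx:
  assumes t: "t \<ge> 0"
  shows "trunc_abs_mean t n \<le> abs_mean t" and "n \<ge> 1 \<Longrightarrow> abs_mean t - trunc_abs_mean t n \<le> 2 * K4 t / real n"
proof -
  have q: "\<bar>min \<bar>of_int z\<bar> (real n)\<bar> \<le> 1 * (1 + (of_int z :: real)\<^sup>2)"
    "\<bar>\<bar>of_int z\<bar>\<bar> \<le> 1 * (1 + (of_int z :: real)\<^sup>2)" for z
    using abs_le_one_plus_sq[of z] by auto
  have s: "(\<lambda>z. \<bar>of_int z\<bar> * p t z) summable_on UNIV" "(\<lambda>z. min \<bar>of_int z\<bar> (real n) * p t z) summable_on UNIV"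
    using summable_quadratic[OF t q(2)] summable_quadratic[OF t q(1)] by simp_all
  have eq: "abs_mean t - trunc_abs_mean t n = (\<Sum>\<^sub>\<infinity>z. (\<bar>of_int z\<bar> - min \<bar>of_int z\<bar> (real n)) * p t z)"
    unfolding trunc_abs_mean_eq_E[OF t] abs_mean_def E_def infsum_diff_real[OF s, symmetric]
    by (simp add: algebra_simps)
  have "0 \<le> (\<Sum>\<^sub>\<infinity>z. (\<bar>of_int z\<bar> - min \<bar>of_int z\<bar> (real n)) * p t z)"
    using p_nonneg[OF t] by (intro infsum_nonneg) auto
  then show "trunc_abs_mean t n \<le> abs_mean t"
    using eq by simp
  assume n: "n \<ge> 1"
  have "\<bar>\<Sum>\<^sub>\<infinity>z. (\<bar>of_int z\<bar> - min \<bar>of_int z\<bar> (real n)) * p t z\<bar> \<le> 1 * (2 * K4 t / real n)"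
  proof (rule abs_infsum_tail_le[OF t n])
    show "\<bar>\<bar>of_int z\<bar> - min \<bar>of_int z\<bar> (real n)\<bar> \<le> 1 * w3 z" for z
      using power_le_one_plus_power[of "\<bar>of_int z\<bar> :: real" 1 3] unfolding w3_def by auto
    show "\<bar>of_int z\<bar> - min \<bar>of_int z\<bar> (real n) = 0" if "\<bar>of_int z :: real\<bar> < real n" for z
      using that by simp
  qed simp
  then show "abs_mean t - trunc_abs_mean t n \<le> 2 * K4 t / real n"
    using eq by simp
qed

lemma trunc_abs_mean_increment:
  "\<bar>trunc_abs_mean (t + h) n - trunc_abs_mean t n\<bar> \<le> (\<Sum>y\<in>{- int n..int n}. \<bar>dtail h t y\<bar>)"
proof -
  have "trunc_abs_mean (t + h) n - trunc_abs_mean t n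
      = (\<Sum>y\<in>{1..int n}. dtail h t y) - (\<Sum>y\<in>{- int n + 1..0}. dtail h t y)"
    unfolding trunc_abs_mean_def dtail_def by (simp add: sum_subtractf algebra_simps)
  then have "\<bar>trunc_abs_mean (t + h) n - trunc_abs_mean t n\<bar>
      \<le> (\<Sum>y\<in>{1..int n}. \<bar>dtail h t y\<bar>) + (\<Sum>y\<in>{- int n + 1..0}. \<bar>dtail h t y\<bar>)"
    using sum_abs[of "dtail h t" "{1..int n}"] sum_abs[of "dtail h t" "{- int n + 1..0}"] by linarith
  also have "\<dots> = (\<Sum>y\<in>{1..int n} \<union> {- int n + 1..0}. \<bar>dtail h t y\<bar>)"
    by (rule sum.union_disjoint[symmetric]) auto
  also have "\<dots> \<le> (\<Sum>y\<in>{- int n..int n}. \<bar>dtail h t y\<bar>)"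
    by (rule sum_mono2) auto
  finally show ?thesis .
qed

lemma sum_abs_dtail_le:
  assumes h: "h \<ge> 0" and t: "t \<ge> 0"
  shows "(\<Sum>y\<in>{- int n..int n}. \<bar>dtail h t y\<bar>) \<le> trunc_abs_mean (t + h) n + trunc_abs_mean t n + 1"
proof -
  have th: "t + h \<ge> 0"
    using t h by simp
  have W: "{- int n..int n} = insert (- int n) ({- int n + 1..0} \<union> {1..int n})"
    by auto
  have "(\<Sum>y\<in>{- int n..int n}. \<bar>dtail h t y\<bar>)
      = \<bar>dtail h t (- int n)\<bar> + ((\<Sum>y\<in>{- int n + 1..0}. \<bar>dtail h t y\<bar>) + (\<Sum>y\<in>{1..int n}. \<bar>dtail h t y\<bar>))"
    unfolding W by (subst sum.insert) (auto intro!: sum.union_disjoint)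
  also have "\<dots> \<le> 1 + ((\<Sum>y\<in>{- int n + 1..0}. (1 - tail (t + h) y) + (1 - tail t y))
      + (\<Sum>y\<in>{1..int n}. tail (t + h) y + tail t y))"
  proof (intro add_mono sum_mono)
    show "\<bar>dtail h t (- int n)\<bar> \<le> 1"
      unfolding dtail_def using tail_bounds[OF th, of "- int n"] tail_bounds[OF t, of "- int n"] by auto
    fix y
    show "\<bar>dtail h t y\<bar> \<le> tail (t + h) y + tail t y"
      unfolding dtail_def using tail_bounds[OF th] tail_bounds[OF t] by (intro abs_diff_le_add) auto
    have "dtail h t y = (1 - tail t y) - (1 - tail (t + h) y)"
      unfolding dtail_def by simp
    then show "\<bar>dtail h t y\<bar> \<le> (1 - tail (t + h) y) + (1 - tail t y)"
      using abs_diff_le_add[of "1 - tail t y" "1 - tail (t + h) y"] tail_bounds[OF th, of y] tail_bounds[OF t, of y]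
      by simp
  qed
  also have "\<dots> = trunc_abs_mean (t + h) n + trunc_abs_mean t n + 1"
    unfolding trunc_abs_mean_def sum.distrib by linarith
  finally show ?thesis .
qed

definition sq_mean_sup :: real where "sq_mean_sup = max (sq_mean 1) (sq_mean_drift_bound / \<theta>)"

lemma abs_mean_bounded: "t \<ge> 1 \<Longrightarrow> abs_mean t \<le> 1 + sq_mean_sup"
  using abs_mean_le_sq_mean[of t] sq_mean_bounded[of t] unfolding sq_mean_sup_def by simp

lemma sum_abs_dtail_initial_le:
  assumes "h \<ge> 0"
  shows "(\<Sum>y\<in>{- int n..int n}. \<bar>dtail h 1 y\<bar>) \<le> 2 * (1 + sq_mean_sup) + 1"
proof -
  have "(\<Sum>y\<in>{- int n..int n}. \<bar>dtail h 1 y\<bar>) \<le> trunc_abs_mean (1 + h) n + trunc_abs_mean 1 n + 1"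
    using sum_abs_dtail_le[OF assms, of 1] by (simp add: add.commute)
  also have "\<dots> \<le> abs_mean (1 + h) + abs_mean 1 + 1"
    using trunc_abs_mean_approx(1)[of "1 + h" n] trunc_abs_mean_approx(1)[of 1 n] assms by simp
  also have "\<dots> \<le> 2 * (1 + sq_mean_sup) + 1"
    using abs_mean_bounded[of "1 + h"] abs_mean_bounded[of 1] assms by simp
  finally show ?thesis .
qed

lemma abs_mean_increment:
  assumes t: "t \<ge> 1" and h: "h \<ge> 0"
  shows "\<bar>abs_mean (t + h) - abs_mean t\<bar> \<le> (2 * (1 + sq_mean_sup) + 1) * exp (- \<theta> * (t - 1))"
proof (rule le_of_le_add_div_nat)
  define K where "K = K4 (t + h)"
  fix n :: nat assume n: "n \<ge> 1"
  have "2 * K4 t / real n \<le> 2 * K / real n"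
    unfolding K_def using K4_mono[of t "t + h"] h by (simp add: divide_right_mono)
  then have "\<bar>abs_mean (t + h) - trunc_abs_mean (t + h) n\<bar> \<le> 2 * K / real n"
    "\<bar>abs_mean t - trunc_abs_mean t n\<bar> \<le> 2 * K / real n"
    using trunc_abs_mean_approx[of "t + h" n] trunc_abs_mean_approx[of t n] t h n
    unfolding K_def by auto
  moreover have "exp (- \<theta> * (t - 1)) * (\<Sum>y\<in>{- int n..int n}. \<bar>dtail h 1 y\<bar>)
      \<le> exp (- \<theta> * (t - 1)) * (2 * (1 + sq_mean_sup) + 1)"
    by (rule mult_left_mono[OF sum_abs_dtail_initial_le[OF h]]) simp
  then have "\<bar>trunc_abs_mean (t + h) n - trunc_abs_mean t n\<bar>
      \<le> exp (- \<theta> * (t - 1)) * (2 * (1 + sq_mean_sup) + 1) + 12 * (\<alpha> + \<beta> + \<theta>) * K / real n / \<theta>"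
    using trunc_abs_mean_increment[of t h n] L1_contraction[OF h t n] unfolding K_def by linarith
  moreover have "2 * K / real n + 2 * K / real n + 12 * (\<alpha> + \<beta> + \<theta>) * K / real n / \<theta>
      = (4 * K + 12 * (\<alpha> + \<beta> + \<theta>) * K / \<theta>) / real n"
    using n theta_pos by (simp add: field_simps)
  ultimately show "\<bar>abs_mean (t + h) - abs_mean t\<bar>
      \<le> (2 * (1 + sq_mean_sup) + 1) * exp (- \<theta> * (t - 1)) + (4 * K + 12 * (\<alpha> + \<beta> + \<theta>) * K / \<theta>) / real n"
    by (simp add: mult.commute) linarith
qed

lemma abs_mean_convergent: "\<exists>La. (abs_mean \<longlongrightarrow> La) at_top"
proof (rule tendsto_of_increment_bound[OF _ abs_mean_increment])
  have "((\<lambda>t. B * exp (- \<theta> * (t - 1))) \<longlongrightarrow> 0) at_top" for B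
    using theta_pos by real_asymp
  then show "((\<lambda>t. (2 * (1 + sq_mean_sup) + 1) * exp (- \<theta> * (t - 1))) \<longlongrightarrow> 0) at_top" .
qed

lemma mean_pos_eq:
  assumes "t \<ge> 0"
  shows "mean_pos p t = (abs_mean t + mean t) / 2"
proof -
  have "mean_pos p t = E (\<lambda>y. 0 + 1 / 2 * \<bar>of_int y\<bar> + 1 / 2 * of_int y + 0 * (of_int y)\<^sup>2) t"
    unfolding mean_pos_def E_def real_of_int_pos_part by (simp add: add_divide_distrib)
  also have "\<dots> = 0 + 1 / 2 * abs_mean t + 1 / 2 * mean t + 0 * sq_mean t"
    by (rule E_moment_comb[OF assms])
  finally show ?thesis
    by simp
qed

lemma mean_neg_eq:
  assumes "t \<ge> 0"
  shows "mean_neg p t = (abs_mean t - mean t) / 2"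
proof -
  have "mean_neg p t = E (\<lambda>y. 0 + 1 / 2 * \<bar>of_int y\<bar> + (- 1 / 2) * of_int y + 0 * (of_int y)\<^sup>2) t"
    unfolding mean_neg_def E_def real_of_int_neg_part by (simp add: diff_divide_distrib)
  also have "\<dots> = 0 + 1 / 2 * abs_mean t + (- 1 / 2) * mean t + 0 * sq_mean t"
    by (rule E_moment_comb[OF assms])
  finally show ?thesis
    by simp
qed

lemma mean_pos_tendsto:
  assumes La: "(abs_mean \<longlongrightarrow> La) at_top"
  shows "(mean_pos p \<longlongrightarrow> (La + (\<alpha> - \<beta>) / \<theta>) / 2) at_top"
proof (rule Lim_transform_eventually)
  show "((\<lambda>t. (abs_mean t + mean t) / 2) \<longlongrightarrow> (La + (\<alpha> - \<beta>) / \<theta>) / 2) at_top"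
    by (intro tendsto_intros La mean_tendsto) simp
  show "eventually (\<lambda>t. (abs_mean t + mean t) / 2 = mean_pos p t) at_top"
    using eventually_ge_at_top[of 0] by eventually_elim (simp add: mean_pos_eq)
qed

lemma mean_neg_tendsto:
  assumes La: "(abs_mean \<longlongrightarrow> La) at_top"
  shows "(mean_neg p \<longlongrightarrow> (La - (\<alpha> - \<beta>) / \<theta>) / 2) at_top"
proof (rule Lim_transform_eventually)
  show "((\<lambda>t. (abs_mean t - mean t) / 2) \<longlongrightarrow> (La - (\<alpha> - \<beta>) / \<theta>) / 2) at_top"
    by (intro tendsto_intros La mean_tendsto) simp
  show "eventually (\<lambda>t. (abs_mean t - mean t) / 2 = mean_neg p t) at_top"
    using eventually_ge_at_top[of 0] by eventually_elim (simp add: mean_neg_eq)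
qed

lemma second_moment_tendsto:
  assumes La: "(abs_mean \<longlongrightarrow> La) at_top"
  shows "(second_moment p \<longlongrightarrow> (\<alpha> + \<beta>) / (2 * \<theta>) + ((\<alpha> - \<beta>) / \<theta>)\<^sup>2 + La / 2) at_top"
proof -
  have "second_moment p = sq_mean"
    unfolding second_moment_def sq_mean_def E_def by (rule ext) simp
  moreover have "(sq_mean \<longlongrightarrow> (\<alpha> + \<beta> + \<theta> * La + 2 * (\<alpha> - \<beta>) * ((\<alpha> - \<beta>) / \<theta>)) / (2 * \<theta>)) at_top"
    using theta_pos
    by (intro linear_ode_tendsto[where c = "\<lambda>u. \<alpha> + \<beta> + \<theta> * abs_mean u + 2 * (\<alpha> - \<beta>) * mean u"]
        sq_mean_deriv tendsto_intros La mean_tendsto) auto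
  moreover have "(\<alpha> + \<beta> + \<theta> * La + 2 * (\<alpha> - \<beta>) * ((\<alpha> - \<beta>) / \<theta>)) / (2 * \<theta>)
      = (\<alpha> + \<beta>) / (2 * \<theta>) + ((\<alpha> - \<beta>) / \<theta>)\<^sup>2 + La / 2"
    using theta_pos by (simp add: field_simps power2_eq_square)
  ultimately show ?thesis
    by simp
qed

lemma abs_mean_limit_ge:
  assumes La: "(abs_mean \<longlongrightarrow> La) at_top"
  shows "\<bar>\<alpha> - \<beta>\<bar> / \<theta> \<le> La"
proof (rule tendsto_le[OF trivial_limit_at_top_linorder La])
  show "((\<lambda>t. \<bar>mean t\<bar>) \<longlongrightarrow> \<bar>\<alpha> - \<beta>\<bar> / \<theta>) at_top"
    using mean_tendsto theta_pos by (auto dest: tendsto_rabs)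
  show "eventually (\<lambda>t. \<bar>mean t\<bar> \<le> abs_mean t) at_top"
    using eventually_ge_at_top[of 0] by eventually_elim (rule abs_mean_ge_mean)
qed

end

theorem mainTheorem4:
  fixes \<alpha> \<beta> \<theta> :: real and x :: int and p :: "real \<Rightarrow> int \<Rightarrow> real"
  assumes "\<alpha> > 0" and "\<beta> > 0" and "\<theta> > 0"
    and "bd_law \<alpha> \<beta> \<theta> x p"
  shows "\<exists>Ls Lp Lm.
           (second_moment p \<longlongrightarrow> Ls) at_top \<and>
           (mean_pos p \<longlongrightarrow> Lp) at_top \<and>
           (mean_neg p \<longlongrightarrow> Lm) at_top \<and>
           Ls = (\<alpha> + \<beta>) / (2 * \<theta>) + (\<alpha> - \<beta>)\<^sup>2 / \<theta>\<^sup>2 + (Lp + Lm) / 2 \<and>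
           Ls \<ge> ((\<alpha> - \<beta>) / \<theta>)\<^sup>2 + max \<alpha> \<beta> / \<theta>"
proof -
  interpret birth_death_law \<alpha> \<beta> \<theta> x p
    using assms by unfold_locales
  obtain La where La: "(abs_mean \<longlongrightarrow> La) at_top"
    using abs_mean_convergent by blast
  have "max \<alpha> \<beta> / \<theta> = (\<alpha> + \<beta>) / (2 * \<theta>) + \<bar>\<alpha> - \<beta>\<bar> / (2 * \<theta>)"
    using assms(3) by (simp add: max_def field_simps)
  then have "(\<alpha> + \<beta>) / (2 * \<theta>) + ((\<alpha> - \<beta>) / \<theta>)\<^sup>2 + La / 2 \<ge> ((\<alpha> - \<beta>) / \<theta>)\<^sup>2 + max \<alpha> \<beta> / \<theta>"
    using abs_mean_limit_ge[OF La] by simp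
  then show ?thesis
    using second_moment_tendsto[OF La] mean_pos_tendsto[OF La] mean_neg_tendsto[OF La]
    by (intro exI[of _ "(\<alpha> + \<beta>) / (2 * \<theta>) + ((\<alpha> - \<beta>) / \<theta>)\<^sup>2 + La / 2"] exI conjI)
      (auto simp: power_divide field_simps)
qed

end
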